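(* For every density operator $\rho$ on $\mathbb{C}^d$, $$\overline{C}_{\mathcal{R}}(\rho)=\max_{\Lambda\in\mathrm{GIO}}F\big(\Lambda(\rho),|\phi^+\rangle\langle\phi^+|\big),$$ where $F(\rho,\sigma)=\left(\mathrm{tr}\sqrt{\rho^{1/2}\sigma\rho^{1/2}}\right)^2$ is the fidelity (so that the right-hand side equals $\max_{\Lambda\in\mathrm{GIO}}\langle\phi^+|\Lambda(\rho)|\phi^+\rangle$).
   Context: Fix the computational basis $\{|i\rangle\}_{i=0}^{d-1}$ of $\mathbb{C}^d$ as the incoherent basis; $\mathcal{I}$ denotes the set of density operators diagonal in this basis. Let $|\phi^+\rangle=\frac{1}{\sqrt d}\sum_{i=0}^{d-1}|i\rangle$. The robustness of coherence is $C_{\mathcal{R}}(\rho)=\min\{s\ge0: \exists\text{ density operator }\tau,\ (\rho+s\tau)/(1+s)\in\mathcal{I}\}$ and $\overline{C}_{\mathcal{R}}(\rho)=(1+C_{\mathcal{R}}(\rho))/d$. A genuinely incoherent operation (GIO) is a quantum channel (completely positive trace-preserving map) $\Lambda$ on $d\times d$ matrices with $\Lambda(|i\rangle\langle i|)=|i\rangle\langle i|$ for all $i$; equivalently, $\Lambda(\rho)=\tau\circ\rho$ (entrywise/Schur product) for some positive semidefinite matrix $\tau$ with all diagonal entries equal to $1$ (a correlation matrix). *)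

theory Defs
  imports Complex_Main "Jordan_Normal_Form.Schur_Decomposition"
begin

text \<open>Matrices on C^d are complex d x d matrices of Jordan_Normal_Form (carrier_mat d d).
  The incoherent basis is the standard basis.\<close>

definition adj :: "complex mat \<Rightarrow> complex mat" where
  "adj A = mat_adjoint A"

definition mtrace :: "complex mat \<Rightarrow> complex" where
  "mtrace A = (\<Sum>i<dim_row A. A $$ (i,i))"

definition hermitian_mat :: "nat \<Rightarrow> complex mat \<Rightarrow> bool" where
  "hermitian_mat d A \<longleftrightarrow> A \<in> carrier_mat d d \<and> adj A = A"

definition psd :: "nat \<Rightarrow> complex mat \<Rightarrow> bool" where
  "psd d A \<longleftrightarrow> hermitian_mat d A \<and>
     (\<forall>v \<in> carrier_vec d. 0 \<le> Re (\<Sum>i<d. \<Sum>j<d. cnj (v $ i) * A $$ (i,j) * v $ j))"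

definition density :: "nat \<Rightarrow> complex mat \<Rightarrow> bool" where
  "density d \<rho> \<longleftrightarrow> psd d \<rho> \<and> mtrace \<rho> = 1"

definition incoherent :: "nat \<Rightarrow> complex mat \<Rightarrow> bool" where
  "incoherent d \<rho> \<longleftrightarrow> density d \<rho> \<and> (\<forall>i<d. \<forall>j<d. i \<noteq> j \<longrightarrow> \<rho> $$ (i,j) = 0)"

text \<open>Robustness of coherence (the minimum, written as infimum over the feasible set).\<close>
definition robustness :: "nat \<Rightarrow> complex mat \<Rightarrow> real" where
  "robustness d \<rho> = Inf {s::real. 0 \<le> s \<and>
     (\<exists>\<tau>. density d \<tau> \<and> incoherent d ((1 / (1 + complex_of_real s)) \<cdot>\<^sub>m (\<rho> + complex_of_real s \<cdot>\<^sub>m \<tau>)))}"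

definition robustness_bar :: "nat \<Rightarrow> complex mat \<Rightarrow> real" where
  "robustness_bar d \<rho> = (1 + robustness d \<rho>) / real d"

definition ket :: "nat \<Rightarrow> nat \<Rightarrow> complex vec" where
  "ket d i = unit_vec d i"

definition proj :: "nat \<Rightarrow> complex vec \<Rightarrow> complex mat" where
  "proj d v = mat d d (\<lambda>(i,j). v $ i * cnj (v $ j))"

definition phi_plus :: "nat \<Rightarrow> complex vec" where
  "phi_plus d = vec d (\<lambda>i. complex_of_real (1 / sqrt (real d)))"

definition psd_sqrt :: "nat \<Rightarrow> complex mat \<Rightarrow> complex mat" where
  "psd_sqrt d A = (THE B. psd d B \<and> B * B = A)"

definition fidelity :: "nat \<Rightarrow> complex mat \<Rightarrow> complex mat \<Rightarrow> real" where
  "fidelity d \<rho> \<sigma> =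
     (Re (mtrace (psd_sqrt d (psd_sqrt d \<rho> * \<sigma> * psd_sqrt d \<rho>))))^2"

definition quantum_channel :: "nat \<Rightarrow> (complex mat \<Rightarrow> complex mat) \<Rightarrow> bool" where
  "quantum_channel d \<Lambda> \<longleftrightarrow>
     (\<exists>(n::nat) (K :: nat \<Rightarrow> complex mat).
        (\<forall>k<n. K k \<in> carrier_mat d d) \<and>
        mat d d (\<lambda>(i,j). \<Sum>k<n. (adj (K k) * K k) $$ (i,j)) = 1\<^sub>m d \<and>
        (\<forall>\<rho> \<in> carrier_mat d d.
           \<Lambda> \<rho> = mat d d (\<lambda>(i,j). \<Sum>k<n. (K k * \<rho> * adj (K k)) $$ (i,j))))"

definition GIO :: "nat \<Rightarrow> (complex mat \<Rightarrow> complex mat) \<Rightarrow> bool" where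
  "GIO d \<Lambda> \<longleftrightarrow> quantum_channel d \<Lambda> \<and>
     (\<forall>i<d. \<Lambda> (proj d (ket d i)) = proj d (ket d i))"

end

(* The genuinely incoherent operations are exactly the Schur multipliers sigma |-> sigma o X by
   correlation matrices X (positive semidefinite with unit diagonal), because a channel fixing
   every |i><i| has diagonal Kraus operators. As F(sigma, |phi+><phi+|) = <phi+|sigma|phi+>
   = (1/d) sum_ij sigma_ij, the right-hand side is (1/d) max_X Re sum_ij rho_ij X_ij, a
   semidefinite program whose dual is the robustness. Weak duality: if rho = (1+s) delta - s tau
   with delta diagonal, then delta o X has trace 1 and tau o X is positive. Strong duality: a
   maximiser X exists by compactness, and perturbing it inside the correlation matrices shows
   rho <= D = diag (Re sum_j rho_ij X_ij); the rescaled gap D - rho is a tau attaining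
   s = tr D - 1. The fidelity itself is computed with the positive square root, for which a
   spectral theorem is proved by maximising Rayleigh quotients. *)

theory Submission
  imports Defs "HOL-Analysis.Function_Topology" "HOL-Analysis.Elementary_Metric_Spaces"
begin

lemma adj_carrier: "A \<in> carrier_mat n m \<Longrightarrow> adj A \<in> carrier_mat m n"
  unfolding adj_def mat_adjoint_def by (auto simp: mat_of_rows_def)

lemma adj_index: "A \<in> carrier_mat n m \<Longrightarrow> i < m \<Longrightarrow> j < n \<Longrightarrow> adj A $$ (i,j) = cnj (A $$ (j,i))"
  unfolding adj_def mat_adjoint_def by (auto simp: mat_of_rows_def)

lemma index_mult_mat_sum:
  "A \<in> carrier_mat n k \<Longrightarrow> B \<in> carrier_mat k m \<Longrightarrow> i < n \<Longrightarrow> j < m \<Longrightarrow>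
   (A * B) $$ (i,j) = (\<Sum>l<k. A $$ (i,l) * B $$ (l,j))"
  by (auto simp: scalar_prod_def atLeast0LessThan intro!: sum.cong)

lemma mat_eq_entries:
  "A \<in> carrier_mat d d \<Longrightarrow> B \<in> carrier_mat d d \<Longrightarrow>
   (\<And>i j. i < d \<Longrightarrow> j < d \<Longrightarrow> A $$ (i,j) = B $$ (i,j)) \<Longrightarrow> A = B"
  by (rule eq_matI) auto

lemma hermitian_mat_iff: "hermitian_mat d A \<longleftrightarrow> A \<in> carrier_mat d d \<and> (\<forall>i<d. \<forall>j<d. A $$ (i,j) = cnj (A $$ (j,i)))"
proof
  assume h: "hermitian_mat d A"
  then have A: "A \<in> carrier_mat d d" and e: "adj A = A" unfolding hermitian_mat_def by auto
  show "A \<in> carrier_mat d d \<and> (\<forall>i<d. \<forall>j<d. A $$ (i,j) = cnj (A $$ (j,i)))"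
  proof (intro conjI allI impI A)
    fix i j assume ij: "i < d" "j < d"
    have "adj A $$ (i,j) = cnj (A $$ (j,i))" by (rule adj_index[OF A ij])
    then show "A $$ (i,j) = cnj (A $$ (j,i))" unfolding e .
  qed
next
  assume h: "A \<in> carrier_mat d d \<and> (\<forall>i<d. \<forall>j<d. A $$ (i,j) = cnj (A $$ (j,i)))"
  then have A: "A \<in> carrier_mat d d" and e: "\<And>i j. i < d \<Longrightarrow> j < d \<Longrightarrow> A $$ (i,j) = cnj (A $$ (j,i))" by blast+
  have ac: "adj A \<in> carrier_mat d d" by (rule adj_carrier[OF A])
  have "adj A = A"
  proof (rule eq_matI)
    fix i j assume "i < dim_row A" "j < dim_col A"
    then have ij: "i < d" "j < d" using A by auto
    show "adj A $$ (i,j) = A $$ (i,j)" unfolding adj_index[OF A ij] using e[OF ij] by simp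
  qed (use A ac in auto)
  then show "hermitian_mat d A" unfolding hermitian_mat_def using A by auto
qed

lemma hermitian_matD: "hermitian_mat d A \<Longrightarrow> i < d \<Longrightarrow> j < d \<Longrightarrow> A $$ (i,j) = cnj (A $$ (j,i))"
  unfolding hermitian_mat_iff by blast

lemma hermitian_mat_mat:
  "hermitian_mat d (mat d d f) \<longleftrightarrow> (\<forall>i<d. \<forall>j<d. f (i,j) = cnj (f (j,i)))"
  by (simp add: hermitian_mat_iff)

text \<open>A vector of \<open>\<complex>\<^sup>d\<close> is a function \<open>nat \<Rightarrow> complex\<close> of which only the values below \<open>d\<close>
  matter; this avoids the carrier side conditions of \<^typ>\<open>complex vec\<close>.\<close>

definition cinner :: "nat \<Rightarrow> (nat \<Rightarrow> complex) \<Rightarrow> (nat \<Rightarrow> complex) \<Rightarrow> complex" where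
  "cinner d x y = (\<Sum>i<d. cnj (x i) * y i)"

definition sqnorm :: "nat \<Rightarrow> (nat \<Rightarrow> complex) \<Rightarrow> real" where
  "sqnorm d x = (\<Sum>i<d. (cmod (x i))\<^sup>2)"

definition mat_app :: "nat \<Rightarrow> complex mat \<Rightarrow> (nat \<Rightarrow> complex) \<Rightarrow> nat \<Rightarrow> complex" where
  "mat_app d A x = (\<lambda>i. \<Sum>j<d. A $$ (i,j) * x j)"

definition sesq :: "nat \<Rightarrow> complex mat \<Rightarrow> (nat \<Rightarrow> complex) \<Rightarrow> (nat \<Rightarrow> complex) \<Rightarrow> complex" where
  "sesq d A x y = (\<Sum>i<d. \<Sum>j<d. cnj (x i) * A $$ (i,j) * y j)"

definition unit_fun :: "nat \<Rightarrow> nat \<Rightarrow> complex" where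
  "unit_fun a = (\<lambda>l. if l = a then 1 else 0)"

lemma cnj_mult_self: "cnj z * z = complex_of_real ((cmod z)\<^sup>2)"
  by (metis complex_norm_square mult.commute of_real_power)

lemma cinner_cong:
  "(\<And>i. i < d \<Longrightarrow> x i = x' i) \<Longrightarrow> (\<And>i. i < d \<Longrightarrow> y i = y' i) \<Longrightarrow> cinner d x y = cinner d x' y'"
  unfolding cinner_def by (auto intro!: sum.cong)

lemma cinner_swap: "cinner d y x = cnj (cinner d x y)"
  unfolding cinner_def by (simp add: mult.commute)

lemma cinner_self: "cinner d x x = complex_of_real (sqnorm d x)"
  unfolding cinner_def sqnorm_def by (simp add: cnj_mult_self)

lemma cinner_add_left: "cinner d (\<lambda>i. x i + y i) z = cinner d x z + cinner d y z"
  unfolding cinner_def by (simp add: ring_distribs sum.distrib)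

lemma cinner_add_right: "cinner d z (\<lambda>i. x i + y i) = cinner d z x + cinner d z y"
  unfolding cinner_def by (simp add: ring_distribs sum.distrib)

lemma cinner_diff_right: "cinner d z (\<lambda>i. x i - y i) = cinner d z x - cinner d z y"
  unfolding cinner_def by (simp add: ring_distribs sum_subtractf)

lemma cinner_scale_left: "cinner d (\<lambda>i. c * x i) z = cnj c * cinner d x z"
  unfolding cinner_def by (simp add: sum_distrib_left mult.assoc)

lemma cinner_scale_right: "cinner d z (\<lambda>i. c * x i) = c * cinner d z x"
  unfolding cinner_def by (simp add: sum_distrib_left mult.left_commute)

lemma sqnorm_nonneg: "0 \<le> sqnorm d x"
  unfolding sqnorm_def by (simp add: sum_nonneg)

lemma sqnorm_eq_0D: "sqnorm d x = 0 \<Longrightarrow> i < d \<Longrightarrow> x i = 0"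
  unfolding sqnorm_def by (subst (asm) sum_nonneg_eq_0_iff) auto

lemma sqnorm_cong: "(\<And>i. i < d \<Longrightarrow> x i = x' i) \<Longrightarrow> sqnorm d x = sqnorm d x'"
  unfolding sqnorm_def by (auto intro!: sum.cong)

lemma sqnorm_scale: "sqnorm d (\<lambda>i. c * x i) = (cmod c)\<^sup>2 * sqnorm d x"
  unfolding sqnorm_def by (simp add: norm_mult power_mult_distrib sum_distrib_left)

lemma sqnorm_coordinate_le: "i < d \<Longrightarrow> (cmod (x i))\<^sup>2 \<le> sqnorm d x"
  unfolding sqnorm_def by (intro member_le_sum) auto

lemma sqnorm_expand:
  "sqnorm d (\<lambda>i. x i + complex_of_real t * y i) = sqnorm d x + 2 * t * Re (cinner d x y) + t\<^sup>2 * sqnorm d y"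
proof -
  have "complex_of_real (sqnorm d (\<lambda>i. x i + complex_of_real t * y i))
      = cinner d x x + complex_of_real t * (cinner d x y + cinner d y x) + complex_of_real (t\<^sup>2) * cinner d y y"
    unfolding cinner_self[symmetric]
    by (simp add: cinner_add_left cinner_add_right cinner_scale_left cinner_scale_right
        algebra_simps power2_eq_square)
  then have "sqnorm d (\<lambda>i. x i + complex_of_real t * y i)
      = Re (cinner d x x + complex_of_real t * (cinner d x y + cinner d y x) + complex_of_real (t\<^sup>2) * cinner d y y)"
    by (metis Re_complex_of_real)
  also have "\<dots> = sqnorm d x + 2 * t * Re (cinner d x y) + t\<^sup>2 * sqnorm d y"
    using cinner_swap[of d y x] by (simp add: cinner_self)
  finally show ?thesis .
qed

lemma sum_delta_mult:
  "(\<Sum>i<(d::nat). f i * (if i = j then 1 else 0)) = (if j < d then f j else (0::'a::comm_semiring_1))"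
  by (induction d) (auto simp: less_Suc_eq)

lemma cinner_unit_fun: "a < d \<Longrightarrow> cinner d (unit_fun a) x = x a"
proof -
  assume "a < d"
  have "cinner d (unit_fun a) x = (\<Sum>i<d. x i * (if i = a then 1 else 0))"
    unfolding cinner_def unit_fun_def by (intro sum.cong) auto
  then show ?thesis unfolding sum_delta_mult using \<open>a < d\<close> by simp
qed

lemma mat_app_cong: "(\<And>j. j < d \<Longrightarrow> x j = y j) \<Longrightarrow> mat_app d A x i = mat_app d A y i"
  unfolding mat_app_def by (auto intro!: sum.cong)

lemma mat_app_scale: "mat_app d A (\<lambda>j. c * x j) i = c * mat_app d A x i"
  unfolding mat_app_def by (simp add: sum_distrib_left mult_ac)

lemma mat_app_diff: "mat_app d A (\<lambda>j. x j - c * y j) i = mat_app d A x i - c * mat_app d A y i"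
  unfolding mat_app_def by (simp add: algebra_simps sum_subtractf sum_distrib_left)

lemma mat_app_mult:
  assumes P: "P \<in> carrier_mat d d" and Q: "Q \<in> carrier_mat d d" and i: "i < d"
  shows "mat_app d (P * Q) x i = mat_app d P (mat_app d Q x) i"
proof -
  have "mat_app d (P * Q) x i = (\<Sum>j<d. (\<Sum>l<d. P $$ (i,l) * Q $$ (l,j)) * x j)"
    unfolding mat_app_def using index_mult_mat_sum[OF P Q i] by (intro sum.cong) auto
  also have "\<dots> = (\<Sum>l<d. P $$ (i,l) * (\<Sum>j<d. Q $$ (l,j) * x j))"
    unfolding sum_distrib_left sum_distrib_right mult.assoc by (rule sum.swap)
  finally show ?thesis unfolding mat_app_def .
qed

lemma sesq_eq_cinner: "sesq d A y x = cinner d y (mat_app d A x)"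
  unfolding sesq_def cinner_def mat_app_def by (simp add: sum_distrib_left mult.assoc)

lemma sesq_cong:
  "(\<And>i. i < d \<Longrightarrow> x i = x' i) \<Longrightarrow> (\<And>i. i < d \<Longrightarrow> y i = y' i) \<Longrightarrow> sesq d A x y = sesq d A x' y'"
  unfolding sesq_def by (auto intro!: sum.cong)

lemma sesq_mat: "sesq d (mat d d f) x y = (\<Sum>i<d. \<Sum>j<d. cnj (x i) * f (i,j) * y j)"
  unfolding sesq_def by (intro sum.cong refl) auto

lemma sesq_add_left: "sesq d A (\<lambda>i. x i + y i) z = sesq d A x z + sesq d A y z"
  unfolding sesq_def by (simp add: ring_distribs sum.distrib)

lemma sesq_add_right: "sesq d A z (\<lambda>i. x i + y i) = sesq d A z x + sesq d A z y"
  unfolding sesq_def by (simp add: ring_distribs sum.distrib)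

lemma sesq_scale_left: "sesq d A (\<lambda>i. c * x i) z = cnj c * sesq d A x z"
  unfolding sesq_def by (simp add: sum_distrib_left mult.assoc)

lemma sesq_scale_right: "sesq d A z (\<lambda>i. c * x i) = c * sesq d A z x"
  unfolding sesq_def by (simp add: sum_distrib_left mult.assoc mult.left_commute)

lemma sesq_unit_fun: "a < d \<Longrightarrow> b < d \<Longrightarrow> sesq d A (unit_fun a) (unit_fun b) = A $$ (a,b)"
  unfolding sesq_eq_cinner cinner_unit_fun by (simp add: mat_app_def unit_fun_def sum_delta_mult)

lemma sesq_hermitian_swap:
  assumes "hermitian_mat d A"
  shows "sesq d A y x = cnj (sesq d A x y)"
proof -
  have "sesq d A y x = (\<Sum>j<d. \<Sum>i<d. cnj (y i) * A $$ (i,j) * x j)"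
    unfolding sesq_def by (rule sum.swap)
  also have "\<dots> = cnj (sesq d A x y)"
    unfolding sesq_def cnj_sum
  proof (intro sum.cong refl)
    fix i j assume "i \<in> {..<d}" "j \<in> {..<d}"
    then have "A $$ (j,i) = cnj (A $$ (i,j))" by (intro hermitian_matD[OF assms]) auto
    then show "cnj (y j) * A $$ (j,i) * x i = cnj (cnj (x i) * A $$ (i,j) * y j)" by simp
  qed
  finally show ?thesis .
qed

lemma hermitian_mat_app_adjoint:
  "hermitian_mat d A \<Longrightarrow> cinner d (mat_app d A x) y = cinner d x (mat_app d A y)"
  by (metis cinner_swap sesq_eq_cinner sesq_hermitian_swap)

lemma sesq_expand_Re:
  assumes "hermitian_mat d A"
  shows "Re (sesq d A (\<lambda>i. x i + complex_of_real t * y i) (\<lambda>i. x i + complex_of_real t * y i))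
       = Re (sesq d A x x) + 2 * t * Re (sesq d A y x) + t\<^sup>2 * Re (sesq d A y y)"
proof -
  have "Re (sesq d A x y) = Re (sesq d A y x)"
    using sesq_hermitian_swap[OF assms, of x y] by simp
  then show ?thesis
    by (simp add: sesq_add_left sesq_add_right sesq_scale_left sesq_scale_right power2_eq_square
        algebra_simps)
qed

lemma psd_iff_sesq: "psd d A \<longleftrightarrow> hermitian_mat d A \<and> (\<forall>x. 0 \<le> Re (sesq d A x x))"
proof
  assume A: "psd d A"
  show "hermitian_mat d A \<and> (\<forall>x. 0 \<le> Re (sesq d A x x))"
  proof (intro conjI allI)
    show "hermitian_mat d A" using A unfolding psd_def by simp
    fix x
    have "sesq d A x x = sesq d A (\<lambda>i. vec d x $ i) (\<lambda>i. vec d x $ i)"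
      by (rule sesq_cong) auto
    moreover have "0 \<le> Re (sesq d A (\<lambda>i. vec d x $ i) (\<lambda>i. vec d x $ i))"
      using A vec_carrier unfolding psd_def sesq_def by blast
    ultimately show "0 \<le> Re (sesq d A x x)" by simp
  qed
next
  assume "hermitian_mat d A \<and> (\<forall>x. 0 \<le> Re (sesq d A x x))"
  then show "psd d A" unfolding psd_def sesq_def by auto
qed

lemma psd_hermitian: "psd d A \<Longrightarrow> hermitian_mat d A"
  unfolding psd_def by auto

lemma psd_carrier: "psd d A \<Longrightarrow> A \<in> carrier_mat d d"
  unfolding psd_def hermitian_mat_def by auto

lemma psd_sesq_nonneg: "psd d A \<Longrightarrow> 0 \<le> Re (sesq d A x x)"
  unfolding psd_iff_sesq by auto

lemma psd_diag_nonneg: "psd d A \<Longrightarrow> i < d \<Longrightarrow> 0 \<le> Re (A $$ (i,i))"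
  by (metis psd_sesq_nonneg sesq_unit_fun)

lemma psd_diag_real:
  assumes "psd d A" "i < d"
  shows "complex_of_real (Re (A $$ (i,i))) = A $$ (i,i)"
proof -
  have "A $$ (i,i) = cnj (A $$ (i,i))"
    using assms by (intro hermitian_matD psd_hermitian)
  then show ?thesis by (simp add: complex_eq_iff)
qed

lemma nonneg_of_quadratic_nonneg:
  fixes a b :: real
  assumes "\<And>t. t > 0 \<Longrightarrow> 0 \<le> 2 * t * a + t\<^sup>2 * b"
  shows "0 \<le> a"
proof (rule ccontr)
  assume "\<not> 0 \<le> a"
  then have a: "a < 0" by simp
  define t where "t = - a / (\<bar>b\<bar> + 1)"
  have t: "t > 0" using a unfolding t_def by (simp add: divide_neg_pos)
  have "t * (\<bar>b\<bar> + 1) = - a" unfolding t_def by simp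
  then have tb: "t * \<bar>b\<bar> < - a" using t by (simp add: algebra_simps)
  have "t\<^sup>2 * b \<le> t * (t * \<bar>b\<bar>)" using t by (simp add: power2_eq_square mult_left_mono)
  also have "\<dots> < t * (- a)" by (rule mult_strict_left_mono[OF tb t])
  finally have "2 * t * a + t\<^sup>2 * b < t * a" by linarith
  also have "t * a < 0" using t a by (simp add: mult_pos_neg)
  finally show False using assms[OF t] by simp
qed

lemma psd_sesq_zero_imp_kernel:
  assumes "psd d A" "Re (sesq d A x x) = 0" "i < d"
  shows "mat_app d A x i = 0"
proof -
  define y where "y = mat_app d A x"
  have "0 \<le> 2 * t * (- sqnorm d y) + t\<^sup>2 * Re (sesq d A y y)" if "t > 0" for t
  proof -
    have "0 \<le> Re (sesq d A (\<lambda>i. x i + complex_of_real (-t) * y i) (\<lambda>i. x i + complex_of_real (-t) * y i))"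
      using assms(1) by (rule psd_sesq_nonneg)
    also have "\<dots> = 2 * t * (- sqnorm d y) + t\<^sup>2 * Re (sesq d A y y)"
      unfolding sesq_expand_Re[OF psd_hermitian[OF assms(1)]]
      using assms(2) by (simp add: sesq_eq_cinner y_def cinner_self)
    finally show ?thesis .
  qed
  then have "0 \<le> - sqnorm d y" by (rule nonneg_of_quadratic_nonneg)
  then have "sqnorm d y = 0" using sqnorm_nonneg[of d y] by linarith
  then show ?thesis using sqnorm_eq_0D assms(3) unfolding y_def by blast
qed

lemma continuous_on_coordinate [continuous_intros]: "continuous_on S (\<lambda>x. x i)"
  by (rule continuous_on_subset[OF continuous_on_product_coordinates]) simp

text \<open>Used instead of \<open>compact_cball\<close>: the \<open>heine_borel\<close> instance of \<^typ>\<open>complex\<close> lives in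
  theories whose vector syntax clashes with that of Jordan_Normal_Form.\<close>

lemma compact_complex_square: "compact ((\<lambda>(a, b). Complex a b) ` (cball 0 B \<times> cball 0 B))"
proof (rule compact_continuous_image)
  show "continuous_on (cball 0 B \<times> cball 0 B) (\<lambda>(a, b). Complex a b)"
    unfolding Complex_eq case_prod_unfold by (intro continuous_intros)
qed (intro compact_Times compact_cball)

text \<open>Coordinatewise bounded sets are compact in the product topology (Tychonoff).\<close>

lemma bounded_closed_attains_max:
  fixes F :: "('i \<Rightarrow> complex) \<Rightarrow> real"
  assumes "closed S" "S \<noteq> {}" "\<And>x i. x \<in> S \<Longrightarrow> cmod (x i) \<le> B" "continuous_on S F"
  shows "\<exists>x\<in>S. \<forall>y\<in>S. F y \<le> F x"
proof (rule continuous_attains_sup[OF _ assms(2,4)])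
  define K where "K = (\<lambda>(a, b). Complex a b) ` (cball 0 B \<times> cball 0 B)"
  have "compactin (product_topology (\<lambda>_. euclidean) UNIV) (Pi\<^sub>E (UNIV :: 'i set) (\<lambda>_. K))"
    unfolding K_def by (simp add: compactin_PiE compact_complex_square)
  then have "compact (Pi\<^sub>E (UNIV :: 'i set) (\<lambda>_. K))"
    by (simp add: euclidean_product_topology)
  moreover have "z \<in> K" if "cmod z \<le> B" for z
    unfolding K_def using that abs_Re_le_cmod[of z] abs_Im_le_cmod[of z]
    by (intro image_eqI[of _ _ "(Re z, Im z)"]) auto
  then have "S = S \<inter> Pi\<^sub>E UNIV (\<lambda>_. K)"
    using assms(3) by auto
  ultimately show "compact S" using closed_Int_compact[OF assms(1)] by metis
qed

section \<open>Spectral theorem for Hermitian matrices\<close>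

definition orthonormal :: "nat \<Rightarrow> nat \<Rightarrow> (nat \<Rightarrow> nat \<Rightarrow> complex) \<Rightarrow> bool" where
  "orthonormal d k u \<longleftrightarrow> (\<forall>a<k. \<forall>b<k. cinner d (u a) (u b) = (if a = b then 1 else 0))"

definition eigenpair :: "nat \<Rightarrow> complex mat \<Rightarrow> (nat \<Rightarrow> complex) \<Rightarrow> real \<Rightarrow> bool" where
  "eigenpair d A v \<mu> \<longleftrightarrow> (\<forall>i<d. mat_app d A v i = complex_of_real \<mu> * v i)"

lemma eigenpair_cinner:
  assumes h: "hermitian_mat d A" and e: "eigenpair d A v \<mu>"
  shows "cinner d v (mat_app d A w) = complex_of_real \<mu> * cinner d v w"
proof -
  have "cinner d v (mat_app d A w) = cinner d (mat_app d A v) w"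
    by (rule hermitian_mat_app_adjoint[OF h, symmetric])
  also have "\<dots> = cinner d (\<lambda>i. complex_of_real \<mu> * v i) w"
    using e unfolding eigenpair_def by (intro cinner_cong) auto
  finally show ?thesis unfolding cinner_scale_left by simp
qed

text \<open>The projections of the standard basis onto the orthogonal complement cannot all vanish,
  since otherwise the trace of the identity would be \<open>k < d\<close>.\<close>

lemma exists_unit_orthogonal:
  assumes o: "orthonormal d k u" and k: "k < d"
  shows "\<exists>z. (\<forall>a<k. cinner d (u a) z = 0) \<and> sqnorm d z = 1"
proof -
  define p where "p j = (\<lambda>i. unit_fun j i - (\<Sum>a<k. u a i * cnj (u a j)))" for j
  have p_orth: "cinner d (u b) (p j) = 0" if b: "b < k" and j: "j < d" for b j
  proof -
    have "cinner d (u b) (\<lambda>i. \<Sum>a<k. u a i * cnj (u a j)) = (\<Sum>a<k. cinner d (u b) (u a) * cnj (u a j))"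
      unfolding cinner_def by (simp add: sum_distrib_left sum_distrib_right mult.assoc sum.swap[of _ "{..<d}"])
    also have "\<dots> = (\<Sum>a<k. cnj (u a j) * (if a = b then 1 else 0))"
      using o b unfolding orthonormal_def by (intro sum.cong refl) auto
    also have "\<dots> = cnj (u b j)" unfolding sum_delta_mult using b by simp
    finally show ?thesis
      unfolding p_def cinner_diff_right using cinner_swap[of d "unit_fun j" "u b"] cinner_unit_fun[OF j]
      by simp
  qed
  have "\<exists>j<d. sqnorm d (p j) \<noteq> 0"
  proof (rule ccontr)
    assume "\<not> (\<exists>j<d. sqnorm d (p j) \<noteq> 0)"
    then have "p j j = 0" if "j < d" for j using sqnorm_eq_0D that by blast
    then have "(\<Sum>j<d. (1::complex)) = (\<Sum>j<d. \<Sum>a<k. u a j * cnj (u a j))"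
      unfolding p_def unit_fun_def by (intro sum.cong) auto
    also have "\<dots> = (\<Sum>a<k. cinner d (u a) (u a))"
      unfolding cinner_def by (subst sum.swap) (simp add: mult.commute)
    also have "\<dots> = (\<Sum>a<k. (1::complex))"
      using o unfolding orthonormal_def by (intro sum.cong) auto
    finally show False using k by simp
  qed
  then obtain j where j: "j < d" and n0: "sqnorm d (p j) \<noteq> 0" by blast
  define c where "c = 1 / sqrt (sqnorm d (p j))"
  have "sqnorm d (\<lambda>i. complex_of_real c * p j i) = c\<^sup>2 * sqnorm d (p j)"
    by (simp add: sqnorm_scale)
  also have "\<dots> = 1"
    unfolding c_def using n0 sqnorm_nonneg[of d "p j"] by (simp add: power_divide)
  finally have "sqnorm d (\<lambda>i. complex_of_real c * p j i) = 1" .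
  moreover have "\<forall>a<k. cinner d (u a) (\<lambda>i. complex_of_real c * p j i) = 0"
    unfolding cinner_scale_right using p_orth j by simp
  ultimately show ?thesis by blast
qed

lemma rayleigh_max_exists:
  assumes o: "orthonormal d k u" and k: "k < d"
  shows "\<exists>w. (\<forall>a<k. cinner d (u a) w = 0) \<and> sqnorm d w = 1 \<and>
    (\<forall>v. (\<forall>a<k. cinner d (u a) v = 0) \<longrightarrow> sqnorm d v = 1 \<longrightarrow> Re (sesq d A v v) \<le> Re (sesq d A w w))"
proof -
  \<comment> \<open>the values beyond \<open>d\<close> are fixed to \<open>0\<close> to make \<open>S\<close> bounded in every coordinate\<close>
  define S where "S = {x. (\<forall>a<k. cinner d (u a) x = 0) \<and> sqnorm d x = 1 \<and> (\<forall>i. d \<le> i \<longrightarrow> x i = 0)}"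
  define F where "F x = Re (sesq d A x x)" for x
  define trunc where "trunc x = (\<lambda>i. if i < d then x i else 0)" for x :: "nat \<Rightarrow> complex"
  have trunc: "cinner d y (trunc x) = cinner d y x" "sqnorm d (trunc x) = sqnorm d x"
    "sesq d A (trunc x) (trunc x) = sesq d A x x" for x y
    unfolding trunc_def by (auto intro: cinner_cong sqnorm_cong sesq_cong)
  have trunc_S: "trunc x \<in> S" if "\<forall>a<k. cinner d (u a) x = 0" "sqnorm d x = 1" for x
    unfolding S_def using trunc that by (simp add: trunc_def)
  have "closed S"
    unfolding S_def cinner_def sqnorm_def
    by (intro closed_Collect_conj closed_Collect_all closed_Collect_imp closed_Collect_eq
        open_Collect_const continuous_intros)
  moreover have "S \<noteq> {}" using exists_unit_orthogonal[OF o k] trunc_S by blast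
  moreover have "cmod (x i) \<le> 1" if "x \<in> S" for x i
  proof (cases "i < d")
    case True
    then have "(cmod (x i))\<^sup>2 \<le> 1^2" using sqnorm_coordinate_le[of i d x] that unfolding S_def by simp
    then show ?thesis by (rule power2_le_imp_le) simp
  qed (use that in \<open>simp add: S_def\<close>)
  moreover have "continuous_on S F"
    unfolding F_def sesq_def by (intro continuous_intros)
  ultimately obtain w where wS: "w \<in> S" and wmax: "\<And>y. y \<in> S \<Longrightarrow> F y \<le> F w"
    using bounded_closed_attains_max[of S 1 F] by blast
  have "F v \<le> F w" if "\<forall>a<k. cinner d (u a) v = 0" "sqnorm d v = 1" for v
    using wmax[OF trunc_S[OF that]] trunc(3)[of v] unfolding F_def by simp
  then show ?thesis using wS unfolding S_def F_def by blast
qed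

lemma rayleigh_bound_of_unit_bound:
  assumes unit: "\<And>v. \<forall>a<k. cinner d (u a) v = 0 \<Longrightarrow> sqnorm d v = 1 \<Longrightarrow> Re (sesq d A v v) \<le> \<mu>"
    and v: "\<forall>a<k. cinner d (u a) v = 0"
  shows "Re (sesq d A v v) \<le> \<mu> * sqnorm d v"
proof (cases "sqnorm d v = 0")
  case True
  then have "sesq d A v v = sesq d A (\<lambda>_. 0) (\<lambda>_. 0)" by (intro sesq_cong) (auto dest: sqnorm_eq_0D)
  then show ?thesis using True by (simp add: sesq_def)
next
  case False
  then have N: "sqnorm d v > 0" using sqnorm_nonneg[of d v] by linarith
  define c where "c = 1 / sqrt (sqnorm d v)"
  have c2: "c\<^sup>2 * sqnorm d v = 1" unfolding c_def using N by (simp add: power_divide)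
  have "Re (sesq d A (\<lambda>i. complex_of_real c * v i) (\<lambda>i. complex_of_real c * v i)) \<le> \<mu>"
    using unit v c2 by (simp add: sqnorm_scale cinner_scale_right)
  moreover have "sesq d A (\<lambda>i. complex_of_real c * v i) (\<lambda>i. complex_of_real c * v i)
      = complex_of_real (c\<^sup>2) * sesq d A v v"
    by (simp add: sesq_scale_left sesq_scale_right power2_eq_square)
  ultimately have le: "c\<^sup>2 * Re (sesq d A v v) \<le> \<mu>" by simp
  have "c\<^sup>2 * (\<mu> * sqnorm d v) = \<mu>"
    using c2 by (metis mult.commute mult.left_commute mult_1_right)
  then have "c\<^sup>2 * Re (sesq d A v v) \<le> c\<^sup>2 * (\<mu> * sqnorm d v)" using le by (simp only:)
  moreover have "c\<^sup>2 > 0" unfolding c_def using N by simp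
  ultimately show ?thesis by simp
qed

text \<open>A maximiser \<open>w\<close> of the Rayleigh quotient is an eigenvector: the residual
  \<open>r = A w - \<mu> w\<close> is orthogonal to \<open>w\<close> and to the \<open>u a\<close>, and moving from \<open>w\<close> along \<open>r\<close> would
  increase the quotient to second order unless \<open>r = 0\<close>.\<close>

lemma eigenpair_of_rayleigh_max:
  assumes h: "hermitian_mat d A" and e: "\<forall>a<k. eigenpair d A (u a) (lam a)"
    and wW: "\<forall>a<k. cinner d (u a) w = 0" and nw: "sqnorm d w = 1"
    and wmax: "\<forall>v. (\<forall>a<k. cinner d (u a) v = 0) \<longrightarrow> Re (sesq d A v v) \<le> Re (sesq d A w w) * sqnorm d v"
  shows "eigenpair d A w (Re (sesq d A w w))"
proof -
  define \<mu> where "\<mu> = Re (sesq d A w w)"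
  define r where "r = (\<lambda>i. mat_app d A w i - complex_of_real \<mu> * w i)"
  have rW: "\<forall>a<k. cinner d (u a) r = 0"
  proof (intro allI impI)
    fix a assume "a < k"
    then have "cinner d (u a) (mat_app d A w) = complex_of_real (lam a) * cinner d (u a) w"
      using e by (intro eigenpair_cinner[OF h]) simp
    then show "cinner d (u a) r = 0"
      unfolding r_def cinner_diff_right cinner_scale_right using wW \<open>a < k\<close> by simp
  qed
  have sesq_w: "sesq d A w w = complex_of_real \<mu>"
    using sesq_hermitian_swap[OF h, of w w] unfolding \<mu>_def by (simp add: complex_eq_iff)
  have rw: "cinner d r w = 0"
  proof -
    have "cinner d w r = 0"
      unfolding r_def cinner_diff_right cinner_scale_right
      using sesq_w nw by (simp add: sesq_eq_cinner cinner_self)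
    then show ?thesis using cinner_swap[of d r w] by simp
  qed
  have sesq_rw: "sesq d A r w = complex_of_real (sqnorm d r)"
  proof -
    have "mat_app d A w = (\<lambda>i. r i + complex_of_real \<mu> * w i)" unfolding r_def by auto
    then show ?thesis
      unfolding sesq_eq_cinner by (simp add: cinner_add_right cinner_scale_right rw cinner_self)
  qed
  have "0 \<le> 2 * t * (- sqnorm d r) + t\<^sup>2 * (\<mu> * sqnorm d r - Re (sesq d A r r))" if "t > 0" for t
  proof -
    define v where "v = (\<lambda>i. w i + complex_of_real t * r i)"
    have "\<forall>a<k. cinner d (u a) v = 0"
      unfolding v_def cinner_add_right cinner_scale_right using wW rW by simp
    then have "Re (sesq d A v v) \<le> \<mu> * sqnorm d v" using wmax unfolding \<mu>_def by blast
    moreover have "Re (sesq d A v v) = \<mu> + 2 * t * sqnorm d r + t\<^sup>2 * Re (sesq d A r r)"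
      unfolding v_def sesq_expand_Re[OF h] sesq_w sesq_rw by simp
    moreover have "sqnorm d v = 1 + t\<^sup>2 * sqnorm d r"
      unfolding v_def sqnorm_expand nw using rw cinner_swap[of d w r] by simp
    ultimately show ?thesis by (simp add: algebra_simps)
  qed
  then have "0 \<le> - sqnorm d r" by (rule nonneg_of_quadratic_nonneg)
  then have "sqnorm d r = 0" using sqnorm_nonneg[of d r] by linarith
  then show ?thesis
    unfolding eigenpair_def \<mu>_def[symmetric] using sqnorm_eq_0D unfolding r_def by fastforce
qed

lemma hermitian_orthonormal_eigenvectors:
  assumes h: "hermitian_mat d A" and "k \<le> d"
  shows "\<exists>u lam. orthonormal d k u \<and> (\<forall>a<k. eigenpair d A (u a) (lam a))"
  using \<open>k \<le> d\<close>
proof (induction k)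
  case 0
  then show ?case unfolding orthonormal_def by auto
next
  case (Suc k)
  then obtain u lam where o: "orthonormal d k u" and e: "\<forall>a<k. eigenpair d A (u a) (lam a)" by auto
  obtain w where wW: "\<forall>a<k. cinner d (u a) w = 0" and nw: "sqnorm d w = 1"
    and unit_max: "\<forall>v. (\<forall>a<k. cinner d (u a) v = 0) \<longrightarrow> sqnorm d v = 1 \<longrightarrow> Re (sesq d A v v) \<le> Re (sesq d A w w)"
    using rayleigh_max_exists[OF o] Suc.prems by (metis Suc_le_lessD)
  have wmax: "\<forall>v. (\<forall>a<k. cinner d (u a) v = 0) \<longrightarrow> Re (sesq d A v v) \<le> Re (sesq d A w w) * sqnorm d v"
    using unit_max rayleigh_bound_of_unit_bound[of k d u A "Re (sesq d A w w)"] by blast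
  have ew: "eigenpair d A w (Re (sesq d A w w))"
    by (rule eigenpair_of_rayleigh_max[OF h e wW nw wmax])
  have "orthonormal d (Suc k) (u(k := w))"
    unfolding orthonormal_def
  proof (intro allI impI)
    fix a b assume "a < Suc k" "b < Suc k"
    then consider "a = k" "b = k" | "a = k" "b < k" | "a < k" "b = k" | "a < k" "b < k"
      by linarith
    then show "cinner d ((u(k := w)) a) ((u(k := w)) b) = (if a = b then 1 else 0)"
      by cases (use nw wW o cinner_swap[of d w] in \<open>auto simp: cinner_self orthonormal_def\<close>)
  qed
  moreover have "\<forall>a<Suc k. eigenpair d A ((u(k := w)) a) ((lam(k := Re (sesq d A w w))) a)"
    using e ew by (auto simp: less_Suc_eq)
  ultimately show ?case by blast
qed

lemma orthonormal_completeness: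
  assumes o: "orthonormal d d u" and i: "i < d" and j: "j < d"
  shows "(\<Sum>a<d. u a i * cnj (u a j)) = (if i = j then 1 else 0)"
proof -
  define U where "U = mat d d (\<lambda>(i,a). u a i)"
  define V where "V = mat d d (\<lambda>(a,i). cnj (u a i))"
  have U: "U \<in> carrier_mat d d" and V: "V \<in> carrier_mat d d" unfolding U_def V_def by auto
  have "V * U = 1\<^sub>m d"
  proof (rule mat_eq_entries)
    fix a b assume ab: "a < d" "b < d"
    have "(V * U) $$ (a,b) = (\<Sum>l<d. V $$ (a,l) * U $$ (l,b))" by (rule index_mult_mat_sum[OF V U ab])
    also have "\<dots> = cinner d (u a) (u b)"
      unfolding cinner_def U_def V_def using ab by (intro sum.cong) auto
    finally show "(V * U) $$ (a,b) = 1\<^sub>m d $$ (a,b)" using o ab unfolding orthonormal_def by simp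
  qed (use U V in auto)
  then have "U * V = 1\<^sub>m d" using mat_mult_left_right_inverse[OF V U] by simp
  moreover have "(U * V) $$ (i,j) = (\<Sum>a<d. U $$ (i,a) * V $$ (a,j))" by (rule index_mult_mat_sum[OF U V i j])
  moreover have "\<dots> = (\<Sum>a<d. u a i * cnj (u a j))"
    unfolding U_def V_def using i j by (intro sum.cong) auto
  ultimately show ?thesis using i j by simp
qed

lemma eigenbasis_reconstruct:
  assumes o: "orthonormal d d u" and e: "\<forall>a<d. eigenpair d M (u a) (lam a)" and i: "i < d" and j: "j < d"
  shows "M $$ (i,j) = (\<Sum>a<d. complex_of_real (lam a) * u a i * cnj (u a j))"
proof -
  have "M $$ (i,j) = (\<Sum>l<d. M $$ (i,l) * (if l = j then 1 else 0))"
    unfolding sum_delta_mult using j by simp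
  also have "\<dots> = (\<Sum>l<d. M $$ (i,l) * (\<Sum>a<d. u a l * cnj (u a j)))"
    using orthonormal_completeness[OF o _ j] by (intro sum.cong) auto
  also have "\<dots> = (\<Sum>a<d. mat_app d M (u a) i * cnj (u a j))"
    unfolding mat_app_def sum_distrib_left sum_distrib_right mult.assoc by (rule sum.swap)
  also have "\<dots> = (\<Sum>a<d. complex_of_real (lam a) * u a i * cnj (u a j))"
    using e i unfolding eigenpair_def by (intro sum.cong) auto
  finally show ?thesis .
qed

section \<open>Positive semidefinite square roots\<close>

definition spectral_sum :: "nat \<Rightarrow> (nat \<Rightarrow> nat \<Rightarrow> complex) \<Rightarrow> (nat \<Rightarrow> real) \<Rightarrow> complex mat" where
  "spectral_sum d u c = mat d d (\<lambda>(i,j). \<Sum>a<d. complex_of_real (c a) * u a i * cnj (u a j))"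

lemma spectral_sum_carrier: "spectral_sum d u c \<in> carrier_mat d d"
  unfolding spectral_sum_def by simp

lemma sesq_spectral_sum:
  "sesq d (spectral_sum d u c) x y = (\<Sum>a<d. complex_of_real (c a) * cnj (cinner d (u a) x) * cinner d (u a) y)"
proof -
  have "sesq d (spectral_sum d u c) x y
      = (\<Sum>i<d. \<Sum>j<d. \<Sum>a<d. complex_of_real (c a) * (cnj (x i) * u a i) * (cnj (u a j) * y j))"
    unfolding spectral_sum_def sesq_mat by (simp add: sum_distrib_left sum_distrib_right mult_ac)
  also have "\<dots> = (\<Sum>a<d. \<Sum>i<d. \<Sum>j<d. complex_of_real (c a) * (cnj (x i) * u a i) * (cnj (u a j) * y j))"
    by (subst sum.swap, subst (2) sum.swap) (rule refl)
  also have "\<dots> = (\<Sum>a<d. complex_of_real (c a) * cnj (cinner d (u a) x) * cinner d (u a) y)"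
    unfolding cinner_def by (simp add: sum_distrib_left sum_distrib_right mult_ac)
  finally show ?thesis .
qed

lemma spectral_sum_psd:
  assumes "\<forall>a<d. 0 \<le> c a"
  shows "psd d (spectral_sum d u c)"
  unfolding psd_iff_sesq
proof (intro conjI allI)
  show "hermitian_mat d (spectral_sum d u c)"
    unfolding spectral_sum_def hermitian_mat_mat by (simp add: mult_ac)
  fix x
  have "Re (sesq d (spectral_sum d u c) x x) = (\<Sum>a<d. c a * (cmod (cinner d (u a) x))\<^sup>2)"
    unfolding sesq_spectral_sum by (simp add: Re_sum mult.assoc cnj_mult_self)
  also have "\<dots> \<ge> 0" using assms by (intro sum_nonneg) auto
  finally show "0 \<le> Re (sesq d (spectral_sum d u c) x x)" .
qed

lemma spectral_sum_eigenpair: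
  assumes o: "orthonormal d d u" and b: "b < d"
  shows "eigenpair d (spectral_sum d u c) (u b) (c b)"
  unfolding eigenpair_def
proof (intro allI impI)
  fix i assume i: "i < d"
  have "mat_app d (spectral_sum d u c) (u b) i
      = (\<Sum>l<d. \<Sum>a<d. complex_of_real (c a) * u a i * (cnj (u a l) * u b l))"
    unfolding mat_app_def spectral_sum_def using i by (simp add: sum_distrib_left sum_distrib_right mult_ac)
  also have "\<dots> = (\<Sum>a<d. complex_of_real (c a) * u a i * cinner d (u a) (u b))"
    unfolding cinner_def by (subst sum.swap) (simp add: sum_distrib_left)
  also have "\<dots> = (\<Sum>a<d. complex_of_real (c a) * u a i * (if a = b then 1 else 0))"
    using o b unfolding orthonormal_def by (intro sum.cong refl) auto
  finally show "mat_app d (spectral_sum d u c) (u b) i = complex_of_real (c b) * u b i"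
    unfolding sum_delta_mult using b by simp
qed

lemma psd_eigenvalue_nonneg:
  assumes p: "psd d A" and o: "orthonormal d d u" and e: "eigenpair d A (u a) \<mu>" and a: "a < d"
  shows "0 \<le> \<mu>"
proof -
  have "sesq d A (u a) (u a) = cinner d (u a) (\<lambda>i. complex_of_real \<mu> * u a i)"
    unfolding sesq_eq_cinner using e unfolding eigenpair_def by (intro cinner_cong) auto
  also have "\<dots> = complex_of_real \<mu>"
    unfolding cinner_scale_right using o a unfolding orthonormal_def by simp
  finally show ?thesis using psd_sesq_nonneg[OF p, of "u a"] by simp
qed

lemma eigenpair_mult_self:
  assumes B: "B \<in> carrier_mat d d" and e: "eigenpair d B v \<mu>"
  shows "eigenpair d (B * B) v (\<mu>\<^sup>2)"
  unfolding eigenpair_def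
proof (intro allI impI)
  fix i assume i: "i < d"
  have "mat_app d (B * B) v i = mat_app d B (\<lambda>j. complex_of_real \<mu> * v j) i"
    unfolding mat_app_mult[OF B B i] using e unfolding eigenpair_def by (intro mat_app_cong) auto
  also have "\<dots> = complex_of_real (\<mu>\<^sup>2) * v i"
    unfolding mat_app_scale using e i unfolding eigenpair_def by (simp add: power2_eq_square)
  finally show "mat_app d (B * B) v i = complex_of_real (\<mu>\<^sup>2) * v i" .
qed

text \<open>For \<open>v = B w - m w\<close> one has \<open>B v = - m v\<close>, so positivity of \<open>B\<close> forces \<open>v = 0\<close> if \<open>m > 0\<close>;
  if \<open>m = 0\<close> then \<open>\<parallel>B w\<parallel>\<^sup>2 = \<langle>w, B\<^sup>2 w\<rangle> = 0\<close>.\<close>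

lemma psd_eigenpair_of_square:
  assumes pB: "psd d B" and e: "eigenpair d (B * B) w (m\<^sup>2)" and m: "0 \<le> m"
  shows "eigenpair d B w m"
proof -
  have hB: "hermitian_mat d B" and B: "B \<in> carrier_mat d d" using pB by (auto dest: psd_hermitian psd_carrier)
  have BBw: "mat_app d B (mat_app d B w) i = complex_of_real (m\<^sup>2) * w i" if "i < d" for i
    using e that unfolding eigenpair_def mat_app_mult[OF B B that, symmetric] by blast
  define v where "v = (\<lambda>i. mat_app d B w i - complex_of_real m * w i)"
  have Bv: "mat_app d B v i = - complex_of_real m * v i" if "i < d" for i
    unfolding v_def mat_app_diff BBw[OF that] by (simp add: algebra_simps power2_eq_square)
  have "sqnorm d v = 0"
  proof (cases "m = 0")
    case True
    have "complex_of_real (sqnorm d v) = cinner d (mat_app d B w) (mat_app d B w)"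
      unfolding cinner_self[symmetric] v_def True by simp
    also have "\<dots> = cinner d w (mat_app d B (mat_app d B w))" by (rule hermitian_mat_app_adjoint[OF hB])
    also have "\<dots> = 0" using BBw True by (simp add: cinner_def)
    finally show ?thesis by simp
  next
    case False
    have "sesq d B v v = cinner d v (\<lambda>i. (- complex_of_real m) * v i)"
      unfolding sesq_eq_cinner using Bv by (intro cinner_cong) auto
    also have "\<dots> = (- complex_of_real m) * complex_of_real (sqnorm d v)"
      by (simp only: cinner_scale_right cinner_self)
    finally have "Re (sesq d B v v) = - m * sqnorm d v" by simp
    then have "m * sqnorm d v \<le> 0" using psd_sesq_nonneg[OF pB, of v] by simp
    then show ?thesis using False m sqnorm_nonneg[of d v] by (simp add: mult_le_0_iff)
  qed
  then show ?thesis unfolding eigenpair_def v_def using sqnorm_eq_0D by fastforce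
qed

lemma psd_root_exists:
  assumes p: "psd d A"
  shows "\<exists>B. psd d B \<and> B * B = A"
proof -
  obtain u lam where o: "orthonormal d d u" and e: "\<forall>a<d. eigenpair d A (u a) (lam a)"
    using hermitian_orthonormal_eigenvectors[OF psd_hermitian[OF p] order_refl] by blast
  have l0: "\<forall>a<d. 0 \<le> lam a" using psd_eigenvalue_nonneg[OF p o] e by blast
  define B where "B = spectral_sum d u (\<lambda>a. sqrt (lam a))"
  have B: "B \<in> carrier_mat d d" unfolding B_def by (rule spectral_sum_carrier)
  have "eigenpair d (B * B) (u a) (lam a)" if "a < d" for a
    using eigenpair_mult_self[OF B spectral_sum_eigenpair[OF o that, of "\<lambda>a. sqrt (lam a)", folded B_def]]
      l0 that by simp
  then have "B * B = A"
    using eigenbasis_reconstruct[OF o] eigenbasis_reconstruct[OF o e]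
    by (intro mat_eq_entries[OF mult_carrier_mat[OF B B] psd_carrier[OF p]]) simp
  moreover have "psd d B" unfolding B_def using l0 by (intro spectral_sum_psd) simp
  ultimately show ?thesis by blast
qed

lemma psd_root_unique:
  assumes pB: "psd d B" and pC: "psd d C" and BC: "B * B = C * C"
  shows "B = C"
proof -
  obtain u \<mu> where o: "orthonormal d d u" and e: "\<forall>a<d. eigenpair d C (u a) (\<mu> a)"
    using hermitian_orthonormal_eigenvectors[OF psd_hermitian[OF pC] order_refl] by blast
  have eB: "\<forall>a<d. eigenpair d B (u a) (\<mu> a)"
  proof (intro allI impI)
    fix a assume a: "a < d"
    show "eigenpair d B (u a) (\<mu> a)"
    proof (rule psd_eigenpair_of_square[OF pB])
      show "eigenpair d (B * B) (u a) ((\<mu> a)\<^sup>2)"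
        unfolding BC using eigenpair_mult_self[OF psd_carrier[OF pC]] e a by blast
      show "0 \<le> \<mu> a" using psd_eigenvalue_nonneg[OF pC o] e a by blast
    qed
  qed
  then show ?thesis
    using eigenbasis_reconstruct[OF o eB] eigenbasis_reconstruct[OF o e]
    by (intro mat_eq_entries[OF psd_carrier[OF pB] psd_carrier[OF pC]]) simp
qed

lemma psd_sqrt:
  assumes "psd d A"
  shows "psd d (psd_sqrt d A)" and "psd_sqrt d A * psd_sqrt d A = A"
proof -
  have "\<exists>!B. psd d B \<and> B * B = A"
    using psd_root_exists[OF assms] psd_root_unique by blast
  then have "psd d (psd_sqrt d A) \<and> psd_sqrt d A * psd_sqrt d A = A"
    unfolding psd_sqrt_def by (rule theI')
  then show "psd d (psd_sqrt d A)" and "psd_sqrt d A * psd_sqrt d A = A" by auto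
qed

lemma psd_sqrt_eqI:
  assumes "psd d B" "B * B = A"
  shows "psd_sqrt d A = B"
  unfolding psd_sqrt_def using assms psd_root_unique by (intro the_equality) auto

definition gram_mat :: "nat \<Rightarrow> nat \<Rightarrow> (nat \<Rightarrow> nat \<Rightarrow> complex) \<Rightarrow> complex mat" where
  "gram_mat d n g = mat d d (\<lambda>(i,j). \<Sum>k<n. g k i * cnj (g k j))"

lemma psd_gram_mat: "psd d (gram_mat d n g)"
  unfolding psd_iff_sesq
proof (intro conjI allI)
  show "hermitian_mat d (gram_mat d n g)"
    unfolding gram_mat_def hermitian_mat_mat by (simp add: mult.commute)
  fix v
  define w where "w k = (\<Sum>i<d. cnj (v i) * g k i)" for k
  have "sesq d (gram_mat d n g) v v = (\<Sum>i<d. \<Sum>j<d. \<Sum>k<n. (cnj (v i) * g k i) * (cnj (g k j) * v j))"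
    unfolding gram_mat_def sesq_mat by (simp add: sum_distrib_left sum_distrib_right mult_ac)
  also have "\<dots> = (\<Sum>k<n. w k * cnj (w k))"
    unfolding w_def cnj_sum sum_product
    by (subst sum.swap, subst (2) sum.swap) (simp add: mult_ac)
  also have "\<dots> = complex_of_real (\<Sum>k<n. (cmod (w k))\<^sup>2)"
    by (simp only: of_real_sum complex_norm_square)
  finally show "0 \<le> Re (sesq d (gram_mat d n g) v v)" by (simp add: sum_nonneg)
qed

lemma psd_eq_gram_mat:
  assumes "psd d X"
  shows "\<exists>g. X = gram_mat d d g"
proof -
  define B where "B = psd_sqrt d X"
  have pB: "psd d B" and BB: "B * B = X" using psd_sqrt[OF assms] unfolding B_def by auto
  have B: "B \<in> carrier_mat d d" using pB by (rule psd_carrier)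
  have "X = gram_mat d d (\<lambda>k i. B $$ (i,k))"
  proof (rule mat_eq_entries)
    fix i j assume i: "i < d" and j: "j < d"
    have "X $$ (i,j) = (\<Sum>k<d. B $$ (i,k) * B $$ (k,j))"
      unfolding BB[symmetric] by (rule index_mult_mat_sum[OF B B i j])
    also have "\<dots> = (\<Sum>k<d. B $$ (i,k) * cnj (B $$ (j,k)))"
      using hermitian_matD[OF psd_hermitian[OF pB] _ j] by (intro sum.cong refl) auto
    finally show "X $$ (i,j) = gram_mat d d (\<lambda>k i. B $$ (i,k)) $$ (i,j)"
      unfolding gram_mat_def using i j by simp
  qed (use assms psd_carrier gram_mat_def in auto)
  then show ?thesis by blast
qed

section \<open>Fidelity with a pure state\<close>

definition outer :: "nat \<Rightarrow> (nat \<Rightarrow> complex) \<Rightarrow> complex mat" where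
  "outer d w = mat d d (\<lambda>(i,j). w i * cnj (w j))"

lemma proj_vec: "proj d (vec d f) = outer d f"
  unfolding proj_def outer_def by (rule cong_mat) auto

lemma outer_carrier: "outer d w \<in> carrier_mat d d"
  unfolding outer_def by simp

lemma psd_outer: "psd d (outer d w)"
proof -
  have "outer d w = gram_mat d 1 (\<lambda>_. w)" unfolding outer_def gram_mat_def by simp
  then show ?thesis by (simp add: psd_gram_mat)
qed

lemma psd_smult:
  assumes A: "psd d A" and c: "0 \<le> c"
  shows "psd d (complex_of_real c \<cdot>\<^sub>m A)"
  unfolding psd_iff_sesq
proof (intro conjI allI)
  have Ac: "A \<in> carrier_mat d d" using A by (rule psd_carrier)
  show "hermitian_mat d (complex_of_real c \<cdot>\<^sub>m A)"
    unfolding hermitian_mat_iff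
  proof (intro conjI allI impI)
    fix i j assume "i < d" "j < d"
    moreover have "A $$ (i,j) = cnj (A $$ (j,i))"
      using psd_hermitian[OF A] \<open>i < d\<close> \<open>j < d\<close> by (rule hermitian_matD)
    ultimately show "(complex_of_real c \<cdot>\<^sub>m A) $$ (i,j) = cnj ((complex_of_real c \<cdot>\<^sub>m A) $$ (j,i))"
      using Ac by simp
  qed (use Ac in simp)
  fix x
  have "sesq d (complex_of_real c \<cdot>\<^sub>m A) x x = complex_of_real c * sesq d A x x"
    unfolding sesq_def using Ac by (auto simp: sum_distrib_left mult_ac intro!: sum.cong)
  then show "0 \<le> Re (sesq d (complex_of_real c \<cdot>\<^sub>m A) x x)"
    using c psd_sesq_nonneg[OF A, of x] by simp
qed

lemma hermitian_outer_conj: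
  assumes h: "hermitian_mat d S"
  shows "S * outer d f * S = outer d (mat_app d S f)"
proof -
  have S: "S \<in> carrier_mat d d" using h unfolding hermitian_mat_def by simp
  have SP: "(S * outer d f) $$ (i,k) = mat_app d S f i * cnj (f k)" if "i < d" "k < d" for i k
  proof -
    have "(S * outer d f) $$ (i,k) = (\<Sum>l<d. S $$ (i,l) * outer d f $$ (l,k))"
      by (rule index_mult_mat_sum[OF S outer_carrier that])
    then show ?thesis
      unfolding mat_app_def outer_def using that by (simp add: sum_distrib_right mult.assoc)
  qed
  show ?thesis
  proof (rule mat_eq_entries)
    fix i j assume i: "i < d" and j: "j < d"
    have "(S * outer d f * S) $$ (i,j) = (\<Sum>k<d. mat_app d S f i * (cnj (f k) * cnj (S $$ (j,k))))"
      unfolding index_mult_mat_sum[OF mult_carrier_mat[OF S outer_carrier] S i j]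
      using SP[OF i] hermitian_matD[OF h _ j] by (intro sum.cong) (auto simp: mult.assoc)
    then show "(S * outer d f * S) $$ (i,j) = outer d (mat_app d S f) $$ (i,j)"
      unfolding outer_def mat_app_def using i j by (simp add: sum_distrib_left mult.commute)
  qed (use S outer_carrier in auto)
qed

lemma outer_mult_outer: "outer d w * outer d w = complex_of_real (sqnorm d w) \<cdot>\<^sub>m outer d w"
proof (rule mat_eq_entries)
  fix i j assume i: "i < d" and j: "j < d"
  have "(outer d w * outer d w) $$ (i,j) = (\<Sum>l<d. outer d w $$ (i,l) * outer d w $$ (l,j))"
    by (rule index_mult_mat_sum[OF outer_carrier outer_carrier i j])
  also have "\<dots> = complex_of_real (sqnorm d w) * (w i * cnj (w j))"
    unfolding outer_def cinner_self[symmetric] cinner_def using i j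
    by (simp add: sum_distrib_left sum_distrib_right mult_ac)
  also have "\<dots> = (complex_of_real (sqnorm d w) \<cdot>\<^sub>m outer d w) $$ (i,j)"
    unfolding outer_def using i j by simp
  finally show "(outer d w * outer d w) $$ (i,j) = (complex_of_real (sqnorm d w) \<cdot>\<^sub>m outer d w) $$ (i,j)" .
qed (simp_all add: mult_carrier_mat[OF outer_carrier outer_carrier] outer_carrier)

text \<open>For \<open>w = 0\<close> the formula holds because \<open>1 / 0 = 0\<close>.\<close>

lemma psd_sqrt_outer:
  "psd_sqrt d (outer d w) = complex_of_real (1 / sqrt (sqnorm d w)) \<cdot>\<^sub>m outer d w"
proof (rule psd_sqrt_eqI)
  define c where "c = 1 / sqrt (sqnorm d w)"
  show "psd d (complex_of_real c \<cdot>\<^sub>m outer d w)"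
    unfolding c_def using sqnorm_nonneg[of d w] by (intro psd_smult psd_outer) simp
  have "(complex_of_real c \<cdot>\<^sub>m outer d w) * (complex_of_real c \<cdot>\<^sub>m outer d w)
      = complex_of_real c \<cdot>\<^sub>m (complex_of_real c \<cdot>\<^sub>m (outer d w * outer d w))"
    by (simp add: mult_smult_assoc_mat[OF outer_carrier smult_carrier_mat[OF outer_carrier]]
        mult_smult_distrib[OF outer_carrier outer_carrier])
  also have "\<dots> = complex_of_real (c * c * sqnorm d w) \<cdot>\<^sub>m outer d w"
    unfolding outer_mult_outer by (rule eq_matI) (simp_all add: outer_def)
  also have "\<dots> = outer d w"
  proof (cases "sqnorm d w = 0")
    case True
    then show ?thesis unfolding outer_def using sqnorm_eq_0D[OF True] by (intro eq_matI) auto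
  next
    case False
    then have "c * c * sqnorm d w = 1" unfolding c_def using sqnorm_nonneg[of d w] by simp
    then show ?thesis unfolding outer_def by (intro eq_matI) auto
  qed
  finally show "(complex_of_real c \<cdot>\<^sub>m outer d w) * (complex_of_real c \<cdot>\<^sub>m outer d w) = outer d w" .
qed

lemma mtrace_smult_outer: "mtrace (c \<cdot>\<^sub>m outer d w) = c * complex_of_real (sqnorm d w)"
  unfolding mtrace_def outer_def cinner_self[symmetric] cinner_def
  by (simp add: sum_distrib_left mult.commute)

text \<open>\<open>\<surd>\<sigma> |f\<rangle>\<langle>f| \<surd>\<sigma> = |w\<rangle>\<langle>w|\<close> with \<open>w = \<surd>\<sigma> f\<close>, whose root has trace \<open>\<parallel>w\<parallel>\<close>; and
  \<open>\<parallel>w\<parallel>\<^sup>2 = \<langle>f, \<sigma> f\<rangle>\<close>.\<close>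

lemma fidelity_pure:
  assumes p: "psd d \<sigma>"
  shows "fidelity d \<sigma> (proj d (vec d f)) = Re (sesq d \<sigma> f f)"
proof -
  define S where "S = psd_sqrt d \<sigma>"
  have pS: "psd d S" and SS: "S * S = \<sigma>" using psd_sqrt[OF p] unfolding S_def by auto
  have S: "S \<in> carrier_mat d d" using pS by (rule psd_carrier)
  define w where "w = mat_app d S f"
  define n where "n = sqnorm d w"
  have root: "psd_sqrt d (S * proj d (vec d f) * S) = complex_of_real (1 / sqrt n) \<cdot>\<^sub>m outer d w"
    unfolding proj_vec hermitian_outer_conj[OF psd_hermitian[OF pS]] psd_sqrt_outer w_def n_def ..
  have "complex_of_real n = cinner d f (mat_app d S (mat_app d S f))"
    unfolding n_def w_def cinner_self[symmetric] by (rule hermitian_mat_app_adjoint[OF psd_hermitian[OF pS]])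
  also have "\<dots> = sesq d \<sigma> f f"
    unfolding sesq_eq_cinner SS[symmetric] using mat_app_mult[OF S S] by (intro cinner_cong) auto
  finally have n: "n = Re (sesq d \<sigma> f f)" by (metis Re_complex_of_real)
  have "fidelity d \<sigma> (proj d (vec d f)) = (n / sqrt n)\<^sup>2"
    unfolding fidelity_def S_def[symmetric] root mtrace_smult_outer n_def by simp
  also have "\<dots> = n"
    using sqnorm_nonneg[of d w] unfolding n_def by (simp add: real_div_sqrt)
  finally show ?thesis unfolding n .
qed

section \<open>Schur products and genuinely incoherent operations\<close>

definition schur_prod :: "nat \<Rightarrow> complex mat \<Rightarrow> complex mat \<Rightarrow> complex mat" where
  "schur_prod d A B = mat d d (\<lambda>(i,j). A $$ (i,j) * B $$ (i,j))"

definition correlation_mat :: "nat \<Rightarrow> complex mat \<Rightarrow> bool" where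
  "correlation_mat d X \<longleftrightarrow> psd d X \<and> (\<forall>i<d. X $$ (i,i) = 1)"

lemma schur_prod_carrier: "schur_prod d A B \<in> carrier_mat d d"
  unfolding schur_prod_def by simp

lemma sesq_schur_prod_gram:
  "sesq d (schur_prod d A (gram_mat d n g)) v v
     = (\<Sum>k<n. sesq d A (\<lambda>i. cnj (g k i) * v i) (\<lambda>i. cnj (g k i) * v i))"
proof -
  have "sesq d (schur_prod d A (gram_mat d n g)) v v
      = (\<Sum>i<d. \<Sum>j<d. \<Sum>k<n. cnj (cnj (g k i) * v i) * A $$ (i,j) * (cnj (g k j) * v j))"
    unfolding schur_prod_def gram_mat_def sesq_mat
    by (intro sum.cong refl) (simp add: sum_distrib_left sum_distrib_right mult_ac)
  also have "\<dots> = (\<Sum>k<n. \<Sum>i<d. \<Sum>j<d. cnj (cnj (g k i) * v i) * A $$ (i,j) * (cnj (g k j) * v j))"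
    by (subst sum.swap, subst (2) sum.swap) (rule refl)
  finally show ?thesis unfolding sesq_def .
qed

text \<open>Schur product theorem, via a Gram decomposition \<open>X = \<Sum>\<^sub>k g\<^sub>k g\<^sub>k\<^sup>\<dagger>\<close>.\<close>

lemma psd_schur_prod:
  assumes A: "psd d A" and X: "psd d X"
  shows "psd d (schur_prod d A X)"
  unfolding psd_iff_sesq
proof (intro conjI allI)
  show "hermitian_mat d (schur_prod d A X)"
    unfolding schur_prod_def hermitian_mat_mat
  proof (intro allI impI)
    fix i j assume "i < d" "j < d"
    moreover have "A $$ (i,j) = cnj (A $$ (j,i))" "X $$ (i,j) = cnj (X $$ (j,i))"
      using hermitian_matD[OF psd_hermitian[OF A]] hermitian_matD[OF psd_hermitian[OF X]]
        \<open>i < d\<close> \<open>j < d\<close> by blast+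
    ultimately show "(case (i,j) of (i,j) \<Rightarrow> A $$ (i,j) * X $$ (i,j))
        = cnj (case (j,i) of (i,j) \<Rightarrow> A $$ (i,j) * X $$ (i,j))" by simp
  qed
  obtain g where "X = gram_mat d d g" using psd_eq_gram_mat[OF X] by blast
  then show "0 \<le> Re (sesq d (schur_prod d A X) v v)" for v
    by (simp add: sesq_schur_prod_gram Re_sum sum_nonneg psd_sesq_nonneg[OF A])
qed

lemma fidelity_phi_plus:
  assumes "psd d \<sigma>"
  shows "fidelity d \<sigma> (proj d (phi_plus d)) = Re (\<Sum>i<d. \<Sum>j<d. \<sigma> $$ (i,j)) / real d"
proof -
  define c where "c = complex_of_real (1 / sqrt (real d))"
  have cc: "cnj c * c = complex_of_real (1 / real d)"
    unfolding c_def by (simp flip: of_real_mult add: power_divide)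
  have "sesq d \<sigma> (\<lambda>_. c) (\<lambda>_. c) = (\<Sum>i<d. \<Sum>j<d. (cnj c * c) * \<sigma> $$ (i,j))"
    unfolding sesq_def by (intro sum.cong refl) (simp add: mult_ac)
  also have "\<dots> = complex_of_real (1 / real d) * (\<Sum>i<d. \<Sum>j<d. \<sigma> $$ (i,j))"
    unfolding cc by (simp add: sum_distrib_left)
  finally have "sesq d \<sigma> (\<lambda>_. c) (\<lambda>_. c) = complex_of_real (1 / real d) * (\<Sum>i<d. \<Sum>j<d. \<sigma> $$ (i,j))" .
  moreover have "phi_plus d = vec d (\<lambda>_. c)" unfolding phi_plus_def c_def ..
  ultimately show ?thesis using fidelity_pure[OF assms] by simp
qed

lemma proj_ket_index:
  "a < d \<Longrightarrow> b < d \<Longrightarrow> i < d \<Longrightarrow> proj d (ket d i) $$ (a,b) = (if a = i \<and> b = i then 1 else 0)"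
  unfolding proj_def ket_def by simp

lemma proj_carrier: "proj d v \<in> carrier_mat d d"
  unfolding proj_def by simp

lemma kraus_conj_proj_ket:
  assumes K: "K \<in> carrier_mat d d" and b: "b < d" and i: "i < d" and j: "j < d"
  shows "(K * proj d (ket d b) * adj K) $$ (i,j) = K $$ (i,b) * cnj (K $$ (j,b))"
proof -
  have KP: "(K * proj d (ket d b)) $$ (i,l) = K $$ (i,b) * (if l = b then 1 else 0)" if l: "l < d" for l
  proof -
    have "(K * proj d (ket d b)) $$ (i,l) = (\<Sum>m<d. K $$ (i,m) * proj d (ket d b) $$ (m,l))"
      by (rule index_mult_mat_sum[OF K proj_carrier i l])
    also have "\<dots> = (\<Sum>m<d. (K $$ (i,b) * (if l = b then 1 else 0)) * (if m = b then 1 else 0))"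
      using proj_ket_index[OF _ l b] by (intro sum.cong refl) auto
    finally show ?thesis unfolding sum_delta_mult using b by simp
  qed
  have "(K * proj d (ket d b) * adj K) $$ (i,j) = (\<Sum>l<d. (K * proj d (ket d b)) $$ (i,l) * adj K $$ (l,j))"
    by (rule index_mult_mat_sum[OF mult_carrier_mat[OF K proj_carrier] adj_carrier[OF K] i j])
  also have "\<dots> = (\<Sum>l<d. (K $$ (i,b) * cnj (K $$ (j,b))) * (if l = b then 1 else 0))"
    using KP adj_index[OF K _ j] by (intro sum.cong refl) auto
  finally show ?thesis unfolding sum_delta_mult using b by simp
qed

lemma diagonal_kraus_conj:
  assumes K: "K \<in> carrier_mat d d" and Kd: "\<And>i j. i < d \<Longrightarrow> j < d \<Longrightarrow> i \<noteq> j \<Longrightarrow> K $$ (i,j) = 0"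
    and S: "\<sigma> \<in> carrier_mat d d" and i: "i < d" and j: "j < d"
  shows "(K * \<sigma> * adj K) $$ (i,j) = K $$ (i,i) * \<sigma> $$ (i,j) * cnj (K $$ (j,j))"
proof -
  have KS: "(K * \<sigma>) $$ (i,l) = K $$ (i,i) * \<sigma> $$ (i,l)" if l: "l < d" for l
  proof -
    have "(K * \<sigma>) $$ (i,l) = (\<Sum>m<d. K $$ (i,m) * \<sigma> $$ (m,l))" by (rule index_mult_mat_sum[OF K S i l])
    also have "\<dots> = (\<Sum>m<d. (K $$ (i,i) * \<sigma> $$ (m,l)) * (if m = i then 1 else 0))"
      using Kd i by (intro sum.cong refl) auto
    finally show ?thesis unfolding sum_delta_mult using i by simp
  qed
  have "(K * \<sigma> * adj K) $$ (i,j) = (\<Sum>l<d. (K * \<sigma>) $$ (i,l) * adj K $$ (l,j))"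
    by (rule index_mult_mat_sum[OF mult_carrier_mat[OF K S] adj_carrier[OF K] i j])
  also have "\<dots> = (\<Sum>l<d. (K $$ (i,i) * \<sigma> $$ (i,j) * cnj (K $$ (j,j))) * (if l = j then 1 else 0))"
    using KS Kd adj_index[OF K _ j] j by (intro sum.cong refl) auto
  finally show ?thesis unfolding sum_delta_mult using j by simp
qed

lemma diagonal_adj_mult_self:
  assumes K: "K \<in> carrier_mat d d" and Kd: "\<And>i j. i < d \<Longrightarrow> j < d \<Longrightarrow> i \<noteq> j \<Longrightarrow> K $$ (i,j) = 0"
    and i: "i < d" and j: "j < d"
  shows "(adj K * K) $$ (i,j) = (if i = j then K $$ (i,i) * cnj (K $$ (i,i)) else 0)"
proof -
  have "(adj K * K) $$ (i,j) = (\<Sum>l<d. adj K $$ (i,l) * K $$ (l,j))"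
    by (rule index_mult_mat_sum[OF adj_carrier[OF K] K i j])
  also have "\<dots> = (\<Sum>l<d. (cnj (K $$ (i,i)) * K $$ (i,j)) * (if l = i then 1 else 0))"
    using Kd adj_index[OF K i] i j by (intro sum.cong refl) auto
  finally show ?thesis unfolding sum_delta_mult using Kd i j by auto
qed

lemma diagonal_kraus_schur_prod:
  fixes n :: nat
  assumes Kc: "\<forall>k<n. K k \<in> carrier_mat d d"
    and Kd: "\<And>k i j. k < n \<Longrightarrow> i < d \<Longrightarrow> j < d \<Longrightarrow> i \<noteq> j \<Longrightarrow> K k $$ (i,j) = 0"
    and S: "\<sigma> \<in> carrier_mat d d"
  shows "mat d d (\<lambda>(i,j). \<Sum>k<n. (K k * \<sigma> * adj (K k)) $$ (i,j)) = schur_prod d \<sigma> (gram_mat d n (\<lambda>k i. K k $$ (i,i)))"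
  unfolding schur_prod_def gram_mat_def
proof (rule cong_mat)
  fix i j assume i: "i < d" and j: "j < d"
  have "(\<Sum>k<n. (K k * \<sigma> * adj (K k)) $$ (i,j)) = (\<Sum>k<n. K k $$ (i,i) * \<sigma> $$ (i,j) * cnj (K k $$ (j,j)))"
    using diagonal_kraus_conj[OF _ Kd S i j] Kc by (intro sum.cong) auto
  then show "(case (i,j) of (i,j) \<Rightarrow> \<Sum>k<n. (K k * \<sigma> * adj (K k)) $$ (i,j))
      = (case (i,j) of (i,j) \<Rightarrow> \<sigma> $$ (i,j) * mat d d (\<lambda>(i,j). \<Sum>k<n. K k $$ (i,i) * cnj (K k $$ (j,j))) $$ (i,j))"
    using i j by (simp add: sum_distrib_left mult_ac)
qed simp_all

lemma diagonal_kraus_trace_preserving_iff: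
  fixes n :: nat
  assumes Kc: "\<forall>k<n. K k \<in> carrier_mat d d"
    and Kd: "\<And>k i j. k < n \<Longrightarrow> i < d \<Longrightarrow> j < d \<Longrightarrow> i \<noteq> j \<Longrightarrow> K k $$ (i,j) = 0"
  shows "mat d d (\<lambda>(i,j). \<Sum>k<n. (adj (K k) * K k) $$ (i,j)) = 1\<^sub>m d
    \<longleftrightarrow> (\<forall>i<d. gram_mat d n (\<lambda>k i. K k $$ (i,i)) $$ (i,i) = 1)"
proof -
  let ?G = "gram_mat d n (\<lambda>k i. K k $$ (i,i))"
  have e: "mat d d (\<lambda>(i,j). \<Sum>k<n. (adj (K k) * K k) $$ (i,j)) $$ (i,j) = (if i = j then ?G $$ (i,i) else 0)"
    if i: "i < d" and j: "j < d" for i j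
    using diagonal_adj_mult_self[OF _ Kd i j] Kc i j unfolding gram_mat_def by (cases "i = j") auto
  show ?thesis
  proof
    assume tp: "mat d d (\<lambda>(i,j). \<Sum>k<n. (adj (K k) * K k) $$ (i,j)) = 1\<^sub>m d"
    show "\<forall>i<d. ?G $$ (i,i) = 1"
    proof (intro allI impI)
      fix i assume i: "i < d"
      have "?G $$ (i,i) = mat d d (\<lambda>(i,j). \<Sum>k<n. (adj (K k) * K k) $$ (i,j)) $$ (i,i)"
        using e[OF i i] by simp
      then show "?G $$ (i,i) = 1" unfolding tp using i by simp
    qed
  next
    assume "\<forall>i<d. ?G $$ (i,i) = 1"
    then show "mat d d (\<lambda>(i,j). \<Sum>k<n. (adj (K k) * K k) $$ (i,j)) = 1\<^sub>m d"
      using e by (intro mat_eq_entries) auto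
  qed
qed

text \<open>The \<open>(a,a)\<close> entry of the image of \<open>|b\<rangle>\<langle>b|\<close> is \<open>\<Sum>k. |K k $$ (a,b)|\<^sup>2\<close>.\<close>

lemma GIO_kraus_diagonal:
  fixes n :: nat
  assumes Kc: "\<forall>k<n. K k \<in> carrier_mat d d"
    and \<Lambda>: "\<forall>\<sigma> \<in> carrier_mat d d. \<Lambda> \<sigma> = mat d d (\<lambda>(i,j). \<Sum>k<n. (K k * \<sigma> * adj (K k)) $$ (i,j))"
    and fix_ket: "\<forall>i<d. \<Lambda> (proj d (ket d i)) = proj d (ket d i)"
    and k: "k < n" and a: "a < d" and b: "b < d" and ab: "a \<noteq> b"
  shows "K k $$ (a,b) = 0"
proof -
  have "complex_of_real (\<Sum>k<n. (cmod (K k $$ (a,b)))\<^sup>2) = (\<Sum>k<n. K k $$ (a,b) * cnj (K k $$ (a,b)))"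
    by (simp only: of_real_sum complex_norm_square)
  also have "\<dots> = \<Lambda> (proj d (ket d b)) $$ (a,a)"
    using \<Lambda> kraus_conj_proj_ket[OF _ b a a] Kc a by (auto intro!: sum.cong simp: proj_carrier)
  also have "\<dots> = 0" using fix_ket proj_ket_index[OF a a b] b ab by auto
  finally have "(\<Sum>k<n. (cmod (K k $$ (a,b)))\<^sup>2) = 0" by (simp only: of_real_eq_0_iff)
  then show ?thesis
    using sum_nonneg_eq_0_iff[of "{..<n}" "\<lambda>k. (cmod (K k $$ (a,b)))\<^sup>2"] k by auto
qed

lemma GIO_schur_form:
  assumes "GIO d \<Lambda>"
  shows "\<exists>X. correlation_mat d X \<and> (\<forall>\<sigma> \<in> carrier_mat d d. \<Lambda> \<sigma> = schur_prod d \<sigma> X)"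
proof -
  have qc: "quantum_channel d \<Lambda>" and fix_ket: "\<forall>i<d. \<Lambda> (proj d (ket d i)) = proj d (ket d i)"
    using assms unfolding GIO_def by simp_all
  obtain n :: nat and K where Kc: "\<forall>k<n. K k \<in> carrier_mat d d"
    and tp: "mat d d (\<lambda>(i,j). \<Sum>k<n. (adj (K k) * K k) $$ (i,j)) = 1\<^sub>m d"
    and \<Lambda>: "\<forall>\<sigma> \<in> carrier_mat d d. \<Lambda> \<sigma> = mat d d (\<lambda>(i,j). \<Sum>k<n. (K k * \<sigma> * adj (K k)) $$ (i,j))"
    using qc unfolding quantum_channel_def by (elim exE conjE) (rule that)
  have Kd: "\<And>k a b. k < n \<Longrightarrow> a < d \<Longrightarrow> b < d \<Longrightarrow> a \<noteq> b \<Longrightarrow> K k $$ (a,b) = 0"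
    using GIO_kraus_diagonal[OF Kc \<Lambda> fix_ket] by blast
  show ?thesis
  proof (intro exI conjI)
    show "correlation_mat d (gram_mat d n (\<lambda>k i. K k $$ (i,i)))"
      using tp diagonal_kraus_trace_preserving_iff[OF Kc Kd]
      unfolding correlation_mat_def by (simp add: psd_gram_mat)
    show "\<forall>\<sigma> \<in> carrier_mat d d. \<Lambda> \<sigma> = schur_prod d \<sigma> (gram_mat d n (\<lambda>k i. K k $$ (i,i)))"
      using \<Lambda> diagonal_kraus_schur_prod[OF Kc Kd] by simp
  qed
qed

lemma correlation_mat_GIO:
  assumes X: "correlation_mat d X"
  shows "\<exists>\<Lambda>. GIO d \<Lambda> \<and> (\<forall>\<sigma> \<in> carrier_mat d d. \<Lambda> \<sigma> = schur_prod d \<sigma> X)"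
proof -
  obtain g where g: "X = gram_mat d d g"
    using X psd_eq_gram_mat unfolding correlation_mat_def by blast
  define K where "K k = mat d d (\<lambda>(i,j). if i = j then g k i else 0)" for k
  have Kc: "\<forall>k<d. K k \<in> carrier_mat d d" unfolding K_def by simp
  have Kd: "\<And>k i j. k < d \<Longrightarrow> i < d \<Longrightarrow> j < d \<Longrightarrow> i \<noteq> j \<Longrightarrow> K k $$ (i,j) = 0"
    unfolding K_def by simp
  have gram: "gram_mat d d (\<lambda>k i. K k $$ (i,i)) = X"
    unfolding g gram_mat_def K_def by (intro cong_mat) auto
  define \<Lambda> where "\<Lambda> \<sigma> = mat d d (\<lambda>(i,j). \<Sum>k<d. (K k * \<sigma> * adj (K k)) $$ (i,j))" for \<sigma>
  have schur: "\<forall>\<sigma> \<in> carrier_mat d d. \<Lambda> \<sigma> = schur_prod d \<sigma> X"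
    unfolding \<Lambda>_def using diagonal_kraus_schur_prod[OF Kc Kd] gram by simp
  have "mat d d (\<lambda>(i,j). \<Sum>k<d. (adj (K k) * K k) $$ (i,j)) = 1\<^sub>m d"
    using diagonal_kraus_trace_preserving_iff[OF Kc Kd] X gram unfolding correlation_mat_def by simp
  then have "quantum_channel d \<Lambda>"
    unfolding quantum_channel_def \<Lambda>_def using Kc by (intro exI[of _ d] exI[of _ K]) simp
  moreover have "\<Lambda> (proj d (ket d i)) = proj d (ket d i)" if i: "i < d" for i
  proof (rule mat_eq_entries)
    fix a b assume "a < d" "b < d"
    then show "\<Lambda> (proj d (ket d i)) $$ (a,b) = proj d (ket d i) $$ (a,b)"
      using schur proj_carrier X i proj_ket_index[OF _ _ i] unfolding correlation_mat_def schur_prod_def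
      by simp
  qed (use schur proj_carrier schur_prod_carrier in simp_all)
  ultimately show ?thesis unfolding GIO_def using schur by blast
qed

section \<open>The dual problem: maximising over correlation matrices\<close>

definition schur_pairing :: "nat \<Rightarrow> complex mat \<Rightarrow> complex mat \<Rightarrow> real" where
  "schur_pairing d A X = Re (\<Sum>i<d. \<Sum>j<d. A $$ (i,j) * X $$ (i,j))"

lemma schur_pairing_eq_sesq: "schur_pairing d A X = Re (sesq d (schur_prod d A X) (\<lambda>_. 1) (\<lambda>_. 1))"
  unfolding schur_pairing_def schur_prod_def sesq_mat by simp

lemma schur_pairing_nonneg: "psd d A \<Longrightarrow> psd d X \<Longrightarrow> 0 \<le> schur_pairing d A X"
  unfolding schur_pairing_eq_sesq by (intro psd_sesq_nonneg psd_schur_prod)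

lemma fidelity_schur_prod_phi_plus:
  assumes "psd d A" "psd d X"
  shows "fidelity d (schur_prod d A X) (proj d (phi_plus d)) = schur_pairing d A X / real d"
proof -
  have "(\<Sum>i<d. \<Sum>j<d. schur_prod d A X $$ (i,j)) = (\<Sum>i<d. \<Sum>j<d. A $$ (i,j) * X $$ (i,j))"
    unfolding schur_prod_def by (intro sum.cong refl) auto
  then show ?thesis
    unfolding fidelity_phi_plus[OF psd_schur_prod[OF assms]] schur_pairing_def by simp
qed

lemma schur_pairing_diagonal:
  assumes "\<forall>i<d. \<forall>j<d. i \<noteq> j \<longrightarrow> A $$ (i,j) = 0" and "\<forall>i<d. X $$ (i,i) = 1"
  shows "schur_pairing d A X = Re (\<Sum>i<d. A $$ (i,i))"
proof -
  have "(\<Sum>i<d. \<Sum>j<d. A $$ (i,j) * X $$ (i,j)) = (\<Sum>i<d. \<Sum>j<d. A $$ (i,i) * (if j = i then 1 else 0))"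
    using assms by (intro sum.cong refl) auto
  then show ?thesis unfolding schur_pairing_def sum_delta_mult by simp
qed

lemma correlation_mat_one: "correlation_mat d (1\<^sub>m d)"
  unfolding correlation_mat_def psd_iff_sesq
proof (intro conjI allI impI)
  show "hermitian_mat d (1\<^sub>m d)" unfolding hermitian_mat_iff by simp
  fix x
  have "sesq d (1\<^sub>m d) x x = (\<Sum>i<d. \<Sum>j<d. (cnj (x i) * x j) * (if j = i then 1 else 0))"
    unfolding sesq_def by (intro sum.cong refl) auto
  also have "\<dots> = complex_of_real (sqnorm d x)" unfolding sum_delta_mult cinner_self[symmetric] cinner_def by simp
  finally show "0 \<le> Re (sesq d (1\<^sub>m d) x x)" using sqnorm_nonneg[of d x] by simp
qed simp

lemma correlation_mat_entry_bound:
  assumes X: "correlation_mat d X" and i: "i < d" and j: "j < d"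
  shows "cmod (X $$ (i,j)) \<le> 1"
proof (cases "i = j")
  case True
  then show ?thesis using X i unfolding correlation_mat_def by simp
next
  case False
  have pX: "psd d X" and "X $$ (i,i) = 1" "X $$ (j,j) = 1" using X i j unfolding correlation_mat_def by auto
  moreover have "X $$ (j,i) = cnj (X $$ (i,j))" using hermitian_matD[OF psd_hermitian[OF pX] j i] .
  moreover define m where "m = X $$ (i,j)"
  moreover define x where "x = (\<lambda>l. unit_fun i l + (- cnj m) * unit_fun j l)"
  ultimately have "sesq d X x x = 1 - cnj m * m"
    unfolding x_def sesq_add_left sesq_add_right sesq_scale_left sesq_scale_right
    using sesq_unit_fun[OF i i] sesq_unit_fun[OF i j] sesq_unit_fun[OF j i] sesq_unit_fun[OF j j]
    by (simp add: algebra_simps)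
  then have "0 \<le> 1 - (cmod m)\<^sup>2" using psd_sesq_nonneg[OF pX, of x] by (simp add: cnj_mult_self)
  then have "(cmod m)\<^sup>2 \<le> 1\<^sup>2" by simp
  then show ?thesis unfolding m_def by (rule power2_le_imp_le) simp
qed

lemma correlation_mat_mat_iff:
  "correlation_mat d (mat d d x) \<longleftrightarrow> (\<forall>i j. i < d \<longrightarrow> j < d \<longrightarrow> x (i,j) = cnj (x (j,i)))
     \<and> (\<forall>v. 0 \<le> Re (\<Sum>i<d. \<Sum>j<d. cnj (v i) * x (i,j) * v j)) \<and> (\<forall>i. i < d \<longrightarrow> x (i,i) = 1)"
  unfolding correlation_mat_def psd_iff_sesq hermitian_mat_mat sesq_mat by auto

text \<open>Correlation matrices form a compact set (all entries have modulus at most \<open>1\<close>).\<close>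

lemma correlation_mat_max_exists:
  "\<exists>X. correlation_mat d X \<and> (\<forall>Y. correlation_mat d Y \<longrightarrow> schur_pairing d \<rho> Y \<le> schur_pairing d \<rho> X)"
proof -
  define S where "S = {x. correlation_mat d (mat d d x) \<and> (\<forall>p. p \<notin> {..<d} \<times> {..<d} \<longrightarrow> x p = 0)}"
  define F where "F x = Re (\<Sum>i<d. \<Sum>j<d. \<rho> $$ (i,j) * x (i,j))" for x
  have F: "F x = schur_pairing d \<rho> (mat d d x)" for x
    unfolding F_def schur_pairing_def by (intro arg_cong[where f = Re] sum.cong refl) auto
  define restr where "restr Y = (\<lambda>(i,j). if i < d \<and> j < d then Y $$ (i,j) else 0)" for Y :: "complex mat"
  have restr: "mat d d (restr Y) = Y" if "Y \<in> carrier_mat d d" for Y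
    unfolding restr_def using that by (intro mat_eq_entries) auto
  have restr_S: "restr Y \<in> S" if "correlation_mat d Y" for Y
    using that restr[of Y] psd_carrier[of d Y] unfolding S_def correlation_mat_def by (auto simp: restr_def)
  have "closed S"
    unfolding S_def correlation_mat_mat_iff
    by (intro closed_Collect_conj closed_Collect_all closed_Collect_imp closed_Collect_eq closed_Collect_le
        open_Collect_const continuous_intros)
  moreover have "S \<noteq> {}" using restr_S[OF correlation_mat_one] by blast
  moreover have "cmod (x p) \<le> 1" if "x \<in> S" for x p
  proof (cases p)
    case (Pair i j)
    then show ?thesis
      using that correlation_mat_entry_bound[of d "mat d d x" i j] unfolding S_def
      by (cases "i < d \<and> j < d") auto
  qed
  moreover have "continuous_on S F"
    unfolding F_def by (intro continuous_intros)
  ultimately obtain x where x: "x \<in> S" and xmax: "\<And>y. y \<in> S \<Longrightarrow> F y \<le> F x"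
    using bounded_closed_attains_max[of S 1 F] by blast
  have "schur_pairing d \<rho> Y \<le> schur_pairing d \<rho> (mat d d x)" if "correlation_mat d Y" for Y
    using xmax[OF restr_S[OF that]] restr[OF psd_carrier] that unfolding F correlation_mat_def by simp
  moreover have "correlation_mat d (mat d d x)" using x unfolding S_def by simp
  ultimately show ?thesis by blast
qed

lemma correlation_mat_perturb:
  assumes X: "correlation_mat d X" and s: "0 \<le> s" and a: "\<And>i. i < d \<Longrightarrow> a i * a i = 1 - s * (cmod (u i))\<^sup>2"
  shows "correlation_mat d (mat d d (\<lambda>(i,j). complex_of_real (a i * a j) * X $$ (i,j) + complex_of_real s * (cnj (u i) * u j)))"
    (is "correlation_mat d ?P")
  unfolding correlation_mat_def psd_iff_sesq
proof (intro conjI allI impI)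
  have pX: "psd d X" using X unfolding correlation_mat_def by simp
  show "hermitian_mat d ?P"
    unfolding hermitian_mat_mat
  proof (intro allI impI)
    fix i j assume "i < d" "j < d"
    then have "X $$ (i,j) = cnj (X $$ (j,i))" by (intro hermitian_matD[OF psd_hermitian[OF pX]])
    then show "(case (i,j) of (i,j) \<Rightarrow> complex_of_real (a i * a j) * X $$ (i,j) + complex_of_real s * (cnj (u i) * u j))
        = cnj (case (j,i) of (i,j) \<Rightarrow> complex_of_real (a i * a j) * X $$ (i,j) + complex_of_real s * (cnj (u i) * u j))"
      by (simp add: mult_ac)
  qed
  fix v
  define z where "z = (\<Sum>j<d. u j * v j)"
  have "sesq d ?P v v = (\<Sum>i<d. \<Sum>j<d. cnj (complex_of_real (a i) * v i) * X $$ (i,j) * (complex_of_real (a j) * v j)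
      + complex_of_real s * (cnj (u i * v i) * (u j * v j)))"
    unfolding sesq_mat by (intro sum.cong refl) (simp add: algebra_simps)
  also have "\<dots> = sesq d X (\<lambda>i. complex_of_real (a i) * v i) (\<lambda>i. complex_of_real (a i) * v i)
      + (\<Sum>i<d. \<Sum>j<d. complex_of_real s * (cnj (u i * v i) * (u j * v j)))"
    unfolding sesq_def by (simp add: sum.distrib)
  also have "(\<Sum>i<d. \<Sum>j<d. complex_of_real s * (cnj (u i * v i) * (u j * v j))) = complex_of_real s * (cnj z * z)"
    unfolding z_def cnj_sum sum_product by (simp add: sum_distrib_left)
  finally have "sesq d ?P v v = sesq d X (\<lambda>i. complex_of_real (a i) * v i) (\<lambda>i. complex_of_real (a i) * v i)
      + complex_of_real s * (cnj z * z)" .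
  then have "Re (sesq d ?P v v) = Re (sesq d X (\<lambda>i. complex_of_real (a i) * v i) (\<lambda>i. complex_of_real (a i) * v i))
      + s * (cmod z)\<^sup>2"
    by (simp add: cnj_mult_self)
  then show "0 \<le> Re (sesq d ?P v v)" using psd_sesq_nonneg[OF pX] s by simp
next
  fix i assume i: "i < d"
  have X1: "X $$ (i,i) = 1" using X i unfolding correlation_mat_def by simp
  have "?P $$ (i,i) = complex_of_real (a i * a i) + complex_of_real (s * (cmod (u i))\<^sup>2)"
    using i X1 by (simp add: cnj_mult_self)
  then show "?P $$ (i,i) = 1" unfolding a[OF i] by (simp flip: of_real_add)
qed

lemma schur_pairing_perturb:
  "schur_pairing d \<rho> (mat d d (\<lambda>(i,j). complex_of_real (a i * a j) * X $$ (i,j) + complex_of_real s * (cnj (u i) * u j)))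
     = (\<Sum>i<d. \<Sum>j<d. a i * a j * Re (\<rho> $$ (i,j) * X $$ (i,j))) + s * Re (sesq d \<rho> u u)"
proof -
  have "(\<Sum>i<d. \<Sum>j<d. \<rho> $$ (i,j) * mat d d (\<lambda>(i,j). complex_of_real (a i * a j) * X $$ (i,j)
          + complex_of_real s * (cnj (u i) * u j)) $$ (i,j))
      = (\<Sum>i<d. \<Sum>j<d. complex_of_real (a i * a j) * (\<rho> $$ (i,j) * X $$ (i,j))
          + complex_of_real s * (cnj (u i) * \<rho> $$ (i,j) * u j))"
    by (intro sum.cong refl) (simp add: algebra_simps)
  then show ?thesis
    unfolding schur_pairing_def sesq_def by (simp add: sum.distrib Re_sum sum_distrib_left)
qed

lemma one_minus_sqrt_mult_sqrt:
  fixes x y :: real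
  assumes "0 \<le> x" "0 \<le> y"
  shows "1 - sqrt x * sqrt y = (1 - x * y) / (1 + sqrt x * sqrt y)"
proof -
  have "0 < 1 + sqrt x * sqrt y" using assms by (simp add: add_pos_nonneg)
  moreover have "(1 - sqrt x * sqrt y) * (1 + sqrt x * sqrt y) = 1 - x * y"
    using assms by (simp add: algebra_simps real_sqrt_mult[symmetric])
  ultimately show ?thesis by (simp add: field_simps)
qed

text \<open>Comparing a maximiser \<open>X\<close> with its perturbations of size \<open>s\<close> gives
  \<open>s u\<^sup>\<dagger>\<rho>u \<le> \<Sum>\<^sub>i\<^sub>j r\<^sub>i\<^sub>j (1 - a\<^sub>i a\<^sub>j)\<close>, and \<open>(1 - a\<^sub>i a\<^sub>j) / s\<close> is the continuous expression below.\<close>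

lemma max_correlation_perturb_bound:
  assumes X: "correlation_mat d X"
    and max: "\<forall>Y. correlation_mat d Y \<longrightarrow> schur_pairing d \<rho> Y \<le> schur_pairing d \<rho> X"
    and s: "0 < s" and small: "\<forall>i<d. s * (cmod (u i))\<^sup>2 \<le> 1"
  shows "Re (sesq d \<rho> u u) \<le> (\<Sum>i<d. \<Sum>j<d. Re (\<rho> $$ (i,j) * X $$ (i,j)) *
           (((cmod (u i))\<^sup>2 + (cmod (u j))\<^sup>2 - s * (cmod (u i))\<^sup>2 * (cmod (u j))\<^sup>2)
            / (1 + sqrt (1 - s * (cmod (u i))\<^sup>2) * sqrt (1 - s * (cmod (u j))\<^sup>2))))"
    (is "_ \<le> (\<Sum>i<d. \<Sum>j<d. ?r i j * ?f i j)")
proof -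
  define a where "a i = sqrt (1 - s * (cmod (u i))\<^sup>2)" for i
  have aa: "a i * a i = 1 - s * (cmod (u i))\<^sup>2" if "i < d" for i
    unfolding a_def using small that by simp
  have "schur_pairing d \<rho> (mat d d (\<lambda>(i,j). complex_of_real (a i * a j) * X $$ (i,j)
      + complex_of_real s * (cnj (u i) * u j))) \<le> schur_pairing d \<rho> X"
    using max correlation_mat_perturb[OF X _ aa] s by simp
  moreover have "schur_pairing d \<rho> X = (\<Sum>i<d. \<Sum>j<d. ?r i j)"
    unfolding schur_pairing_def by (simp add: Re_sum)
  ultimately have "s * Re (sesq d \<rho> u u) \<le> (\<Sum>i<d. \<Sum>j<d. ?r i j * (1 - a i * a j))"
    unfolding schur_pairing_perturb by (simp add: algebra_simps sum_subtractf)
  also have "\<dots> = s * (\<Sum>i<d. \<Sum>j<d. ?r i j * ?f i j)"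
    unfolding sum_distrib_left
  proof (intro sum.cong refl)
    fix i j assume "i \<in> {..<d}" "j \<in> {..<d}"
    then have "1 - a i * a j = s * ?f i j"
      unfolding a_def using small by (subst one_minus_sqrt_mult_sqrt) (auto simp: algebra_simps)
    then show "?r i j * (1 - a i * a j) = s * (?r i j * ?f i j)" by simp
  qed
  finally show ?thesis using s by simp
qed

lemma sum_symmetric_average:
  fixes r :: "nat \<Rightarrow> nat \<Rightarrow> real"
  assumes "\<And>i j. i < d \<Longrightarrow> j < d \<Longrightarrow> r i j = r j i"
  shows "(\<Sum>i<d. \<Sum>j<d. r i j * ((\<alpha> i + \<alpha> j) / 2)) = (\<Sum>i<d. (\<Sum>j<d. r i j) * \<alpha> i)"
proof -
  have swap: "(\<Sum>i<d. \<Sum>j<d. r i j * \<alpha> j) = (\<Sum>i<d. \<Sum>j<d. r i j * \<alpha> i)"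
    using assms by (subst sum.swap) (auto intro!: sum.cong)
  have "(\<Sum>i<d. \<Sum>j<d. r i j * ((\<alpha> i + \<alpha> j) / 2))
      = ((\<Sum>i<d. \<Sum>j<d. r i j * \<alpha> i) + (\<Sum>i<d. \<Sum>j<d. r i j * \<alpha> j)) / 2"
    by (simp add: distrib_left add_divide_distrib sum.distrib sum_divide_distrib)
  then show ?thesis unfolding swap by (simp add: sum_distrib_right)
qed

text \<open>Let \<open>s \<rightarrow> 0\<^sup>+\<close> in the preceding bound.\<close>

lemma max_correlation_dominates:
  assumes h: "hermitian_mat d \<rho>" and X: "correlation_mat d X"
    and max: "\<forall>Y. correlation_mat d Y \<longrightarrow> schur_pairing d \<rho> Y \<le> schur_pairing d \<rho> X"
  shows "Re (sesq d \<rho> u u) \<le> (\<Sum>i<d. Re (\<Sum>j<d. \<rho> $$ (i,j) * X $$ (i,j)) * (cmod (u i))\<^sup>2)"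
proof -
  define \<alpha> where "\<alpha> i = (cmod (u i))\<^sup>2" for i
  define r where "r i j = Re (\<rho> $$ (i,j) * X $$ (i,j))" for i j
  define f where "f s i j = (\<alpha> i + \<alpha> j - s * \<alpha> i * \<alpha> j) / (1 + sqrt (1 - s * \<alpha> i) * sqrt (1 - s * \<alpha> j))"
    for s i j
  have "\<forall>\<^sub>F s in at_right 0. s * \<alpha> i \<le> 1" for i
  proof -
    have "((\<lambda>s. s * \<alpha> i) \<longlongrightarrow> 0 * \<alpha> i) (at_right 0)" by (intro tendsto_intros)
    then have "\<forall>\<^sub>F s in at_right 0. s * \<alpha> i < 1" by (rule order_tendstoD(2)) simp
    then show ?thesis by (rule eventually_mono) simp
  qed
  then have "\<forall>\<^sub>F s in at_right 0. \<forall>i\<in>{..<d}. s * \<alpha> i \<le> 1"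
    by (intro eventually_ball_finite) auto
  then have "\<forall>\<^sub>F s in at_right 0. 0 < s \<and> (\<forall>i<d. s * \<alpha> i \<le> 1)"
    using eventually_at_right_less[of 0] by eventually_elim auto
  then have "\<forall>\<^sub>F s in at_right 0. Re (sesq d \<rho> u u) \<le> (\<Sum>i<d. \<Sum>j<d. r i j * f s i j)"
    by eventually_elim (use max_correlation_perturb_bound[OF X max] in \<open>simp add: \<alpha>_def r_def f_def\<close>)
  moreover have "((\<lambda>s. f s i j) \<longlongrightarrow> (\<alpha> i + \<alpha> j - 0 * \<alpha> i * \<alpha> j)
      / (1 + sqrt (1 - 0 * \<alpha> i) * sqrt (1 - 0 * \<alpha> j))) (at_right 0)" for i j
    unfolding f_def by (intro tendsto_intros) auto
  then have "((\<lambda>s. f s i j) \<longlongrightarrow> (\<alpha> i + \<alpha> j) / 2) (at_right 0)" for i j by simp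
  then have "((\<lambda>s. \<Sum>i<d. \<Sum>j<d. r i j * f s i j) \<longlongrightarrow> (\<Sum>i<d. \<Sum>j<d. r i j * ((\<alpha> i + \<alpha> j) / 2))) (at_right 0)"
    by (intro tendsto_sum tendsto_mult tendsto_const)
  ultimately have "Re (sesq d \<rho> u u) \<le> (\<Sum>i<d. \<Sum>j<d. r i j * ((\<alpha> i + \<alpha> j) / 2))"
    by (intro tendsto_lowerbound) auto
  also have "\<dots> = (\<Sum>i<d. (\<Sum>j<d. r i j) * \<alpha> i)"
  proof (rule sum_symmetric_average)
    fix i j assume ij: "i < d" "j < d"
    have "\<rho> $$ (i,j) = cnj (\<rho> $$ (j,i))" using hermitian_matD[OF h ij] .
    moreover have "X $$ (i,j) = cnj (X $$ (j,i))"
      using X ij unfolding correlation_mat_def by (intro hermitian_matD psd_hermitian) auto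
    ultimately show "r i j = r j i" unfolding r_def by simp
  qed
  finally show ?thesis unfolding \<alpha>_def r_def by (simp add: Re_sum)
qed

section \<open>Robustness of coherence as the optimal value\<close>

definition real_diag :: "nat \<Rightarrow> (nat \<Rightarrow> real) \<Rightarrow> complex mat" where
  "real_diag d c = mat d d (\<lambda>(i,j). if i = j then complex_of_real (c i) else 0)"

lemma sesq_real_diag: "sesq d (real_diag d c) v v = complex_of_real (\<Sum>i<d. c i * (cmod (v i))\<^sup>2)"
proof -
  have "sesq d (real_diag d c) v v = (\<Sum>i<d. \<Sum>j<d. (complex_of_real (c i) * (cnj (v i) * v j)) * (if j = i then 1 else 0))"
    unfolding real_diag_def sesq_mat by (intro sum.cong refl) auto
  also have "\<dots> = (\<Sum>i<d. complex_of_real (c i) * (cnj (v i) * v i))"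
    unfolding sum_delta_mult by simp
  finally show ?thesis by (simp only: cnj_mult_self of_real_sum of_real_mult)
qed

lemma incoherent_real_diag:
  assumes "\<forall>i<d. 0 \<le> c i" and "(\<Sum>i<d. c i) = 1"
  shows "incoherent d (real_diag d c)"
  unfolding incoherent_def density_def psd_iff_sesq
proof (intro conjI allI impI)
  show "hermitian_mat d (real_diag d c)" unfolding real_diag_def hermitian_mat_mat by simp
  show "0 \<le> Re (sesq d (real_diag d c) v v)" for v
    unfolding sesq_real_diag using assms(1) by (auto intro!: sum_nonneg)
  show "mtrace (real_diag d c) = 1"
    unfolding mtrace_def real_diag_def using assms(2) by (simp flip: of_real_sum)
qed (simp add: real_diag_def)

lemma psd_trace_zero_entries:
  assumes M: "psd d M" and tr: "(\<Sum>i<d. Re (M $$ (i,i))) = 0" and i: "i < d" and j: "j < d"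
  shows "M $$ (i,j) = 0"
proof -
  have "Re (M $$ (j,j)) = 0"
    using tr j psd_diag_nonneg[OF M] sum_nonneg_eq_0_iff[of "{..<d}" "\<lambda>i. Re (M $$ (i,i))"] by auto
  then have "mat_app d M (unit_fun j) i = 0"
    using psd_sesq_zero_imp_kernel[OF M _ i] sesq_unit_fun[OF j j] by metis
  then show ?thesis using j by (simp add: mat_app_def unit_fun_def sum_delta_mult)
qed

text \<open>Write \<open>\<rho> = (1 + s) \<delta> - s \<tau>\<close>: \<open>\<delta> \<circ> X\<close> has the trace \<open>1\<close> of the diagonal \<open>\<delta>\<close>, and
  \<open>\<tau> \<circ> X\<close> is positive.\<close>

lemma schur_pairing_le_feasible:
  assumes X: "correlation_mat d X" and s: "0 \<le> s" and \<tau>: "density d \<tau>"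
    and inc: "incoherent d ((1 / (1 + complex_of_real s)) \<cdot>\<^sub>m (\<rho> + complex_of_real s \<cdot>\<^sub>m \<tau>))"
    and \<rho>: "\<rho> \<in> carrier_mat d d"
  shows "schur_pairing d \<rho> X \<le> 1 + s"
proof -
  define \<delta> where "\<delta> = (1 / (1 + complex_of_real s)) \<cdot>\<^sub>m (\<rho> + complex_of_real s \<cdot>\<^sub>m \<tau>)"
  have \<tau>c: "\<tau> \<in> carrier_mat d d" using \<tau> unfolding density_def by (simp add: psd_carrier)
  have s1: "1 + complex_of_real s \<noteq> 0" using s by (simp add: complex_eq_iff)
  have \<rho>e: "\<rho> $$ (i,j) = (1 + complex_of_real s) * \<delta> $$ (i,j) - complex_of_real s * \<tau> $$ (i,j)"
    if "i < d" "j < d" for i j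
    unfolding \<delta>_def using that \<rho> \<tau>c s1 by (simp add: field_simps)
  have "schur_pairing d \<rho> X = (1 + s) * schur_pairing d \<delta> X - s * schur_pairing d \<tau> X"
  proof -
    have "(\<Sum>i<d. \<Sum>j<d. \<rho> $$ (i,j) * X $$ (i,j))
        = (\<Sum>i<d. \<Sum>j<d. (1 + complex_of_real s) * (\<delta> $$ (i,j) * X $$ (i,j)) - complex_of_real s * (\<tau> $$ (i,j) * X $$ (i,j)))"
    proof (intro sum.cong refl)
      fix i j assume "i \<in> {..<d}" "j \<in> {..<d}"
      then show "\<rho> $$ (i,j) * X $$ (i,j)
          = (1 + complex_of_real s) * (\<delta> $$ (i,j) * X $$ (i,j)) - complex_of_real s * (\<tau> $$ (i,j) * X $$ (i,j))"
        by (subst \<rho>e) (auto simp: algebra_simps)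
    qed
    also have "\<dots> = complex_of_real (1 + s) * (\<Sum>i<d. \<Sum>j<d. \<delta> $$ (i,j) * X $$ (i,j))
        - complex_of_real s * (\<Sum>i<d. \<Sum>j<d. \<tau> $$ (i,j) * X $$ (i,j))"
      by (simp add: sum_subtractf sum_distrib_left)
    finally show ?thesis unfolding schur_pairing_def by simp
  qed
  moreover have "schur_pairing d \<delta> X = 1"
  proof -
    have dens: "density d \<delta>" and off: "\<forall>i<d. \<forall>j<d. i \<noteq> j \<longrightarrow> \<delta> $$ (i,j) = 0"
      using inc unfolding \<delta>_def incoherent_def by auto
    have "dim_row \<delta> = d" using dens psd_carrier unfolding density_def by blast
    then have "Re (\<Sum>i<d. \<delta> $$ (i,i)) = 1"
      using dens unfolding density_def mtrace_def by simp
    then show ?thesis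
      using schur_pairing_diagonal[OF off] X unfolding correlation_mat_def by simp
  qed
  moreover have "0 \<le> schur_pairing d \<tau> X"
    using \<tau> X unfolding density_def correlation_mat_def by (simp add: schur_pairing_nonneg)
  ultimately show ?thesis using s by (simp add: mult_nonneg_nonneg)
qed

lemma real_diag_minus_index:
  "\<rho> \<in> carrier_mat d d \<Longrightarrow> i < d \<Longrightarrow> j < d \<Longrightarrow>
   (real_diag d c - \<rho>) $$ (i,j) = (if i = j then complex_of_real (c i) else 0) - \<rho> $$ (i,j)"
  unfolding real_diag_def by simp

lemma psd_real_diag_minus:
  assumes h: "hermitian_mat d \<rho>" and dom: "\<And>u. Re (sesq d \<rho> u u) \<le> (\<Sum>i<d. c i * (cmod (u i))\<^sup>2)"
  shows "psd d (real_diag d c - \<rho>)"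
  unfolding psd_iff_sesq
proof (intro conjI allI)
  have \<rho>: "\<rho> \<in> carrier_mat d d" using h unfolding hermitian_mat_def by simp
  show "hermitian_mat d (real_diag d c - \<rho>)"
    unfolding hermitian_mat_iff
  proof (intro conjI allI impI)
    fix i j assume ij: "i < d" "j < d"
    then have "\<rho> $$ (i,j) = cnj (\<rho> $$ (j,i))" by (intro hermitian_matD[OF h])
    then show "(real_diag d c - \<rho>) $$ (i,j) = cnj ((real_diag d c - \<rho>) $$ (j,i))"
      unfolding real_diag_minus_index[OF \<rho> ij] real_diag_minus_index[OF \<rho> ij(2,1)] by simp
  qed (use \<rho> in \<open>simp add: minus_carrier_mat\<close>)
  fix v
  have "sesq d (real_diag d c - \<rho>) v v
      = (\<Sum>i<d. \<Sum>j<d. cnj (v i) * real_diag d c $$ (i,j) * v j - cnj (v i) * \<rho> $$ (i,j) * v j)"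
    unfolding sesq_def
  proof (intro sum.cong refl)
    fix i j assume "i \<in> {..<d}" "j \<in> {..<d}"
    then have ij: "i < d" "j < d" by auto
    then show "cnj (v i) * (real_diag d c - \<rho>) $$ (i,j) * v j
        = cnj (v i) * real_diag d c $$ (i,j) * v j - cnj (v i) * \<rho> $$ (i,j) * v j"
      unfolding real_diag_minus_index[OF \<rho> ij] by (simp add: real_diag_def algebra_simps)
  qed
  also have "\<dots> = sesq d (real_diag d c) v v - sesq d \<rho> v v"
    unfolding sesq_def by (simp add: sum_subtractf)
  finally show "0 \<le> Re (sesq d (real_diag d c - \<rho>) v v)"
    using dom[of v] unfolding sesq_real_diag by simp
qed

lemma density_smult_inverse_trace:
  assumes M: "psd d M" and tr: "(\<Sum>i<d. Re (M $$ (i,i))) = s" and s: "0 < s"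
  shows "density d (complex_of_real (1 / s) \<cdot>\<^sub>m M)"
  unfolding density_def
proof
  show "psd d (complex_of_real (1 / s) \<cdot>\<^sub>m M)" using M s by (intro psd_smult) simp_all
  have "mtrace (complex_of_real (1 / s) \<cdot>\<^sub>m M) = complex_of_real (1 / s) * (\<Sum>i<d. M $$ (i,i))"
    unfolding mtrace_def using psd_carrier[OF M] by (simp add: sum_distrib_left)
  also have "(\<Sum>i<d. M $$ (i,i)) = (\<Sum>i<d. complex_of_real (Re (M $$ (i,i))))"
    using psd_diag_real[OF M] by (intro sum.cong) auto
  also have "\<dots> = complex_of_real s" unfolding of_real_sum[symmetric] tr ..
  finally show "mtrace (complex_of_real (1 / s) \<cdot>\<^sub>m M) = 1" using s by simp
qed

text \<open>Primal feasibility: a diagonal \<open>D = diag c \<ge> \<rho>\<close> with \<open>tr D = 1 + s\<close> gives the decomposition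
  \<open>\<rho> + s \<tau> = D\<close> with \<open>\<tau> = (D - \<rho>) / s\<close>; for \<open>s = 0\<close> the gap \<open>D - \<rho>\<close> is a positive matrix
  of trace \<open>0\<close>, so \<open>\<rho> = D\<close> is itself incoherent.\<close>

lemma feasible_of_diagonal_dominance:
  assumes dens: "density d \<rho>" and gap: "psd d (real_diag d c - \<rho>)"
  defines "s \<equiv> (\<Sum>i<d. c i) - 1"
  shows "0 \<le> s \<and> (\<exists>\<tau>. density d \<tau> \<and> incoherent d ((1 / (1 + complex_of_real s)) \<cdot>\<^sub>m (\<rho> + complex_of_real s \<cdot>\<^sub>m \<tau>)))"
proof -
  define M where "M = real_diag d c - \<rho>"
  have p\<rho>: "psd d \<rho>" and tr\<rho>: "mtrace \<rho> = 1" using dens unfolding density_def by auto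
  have \<rho>c: "\<rho> \<in> carrier_mat d d" using p\<rho> by (rule psd_carrier)
  have Mc: "M \<in> carrier_mat d d" unfolding M_def using \<rho>c by (rule minus_carrier_mat)
  have Me: "M $$ (i,j) = (if i = j then complex_of_real (c i) else 0) - \<rho> $$ (i,j)" if "i < d" "j < d" for i j
    unfolding M_def using real_diag_minus_index[OF \<rho>c that] .
  have trM: "(\<Sum>i<d. Re (M $$ (i,i))) = s"
  proof -
    have "(\<Sum>i<d. Re (\<rho> $$ (i,i))) = 1" using tr\<rho> \<rho>c unfolding mtrace_def by (simp flip: Re_sum)
    then show ?thesis using Me unfolding s_def by (simp add: sum_subtractf)
  qed
  have pM: "psd d M" unfolding M_def by (rule gap)
  have c0: "0 \<le> c i" if "i < d" for i
    using psd_diag_nonneg[OF pM that] psd_diag_nonneg[OF p\<rho> that] Me[OF that that] by simp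
  have s0: "0 \<le> s" unfolding trM[symmetric] using psd_diag_nonneg[OF pM] by (intro sum_nonneg) simp
  show ?thesis
  proof (cases "s = 0")
    case True
    have "\<rho> $$ (i,j) = 0" if "i < d" "j < d" "i \<noteq> j" for i j
      using psd_trace_zero_entries[OF pM trM[unfolded True] that(1,2)] Me[OF that(1,2)] that(3) by simp
    then have "incoherent d \<rho>" unfolding incoherent_def using dens by blast
    moreover have "(1 / (1 + complex_of_real s)) \<cdot>\<^sub>m (\<rho> + complex_of_real s \<cdot>\<^sub>m \<rho>) = \<rho>"
      using True \<rho>c by (intro mat_eq_entries) auto
    ultimately show ?thesis using s0 dens by (intro conjI exI[of _ \<rho>]) simp_all
  next
    case False
    then have sp: "0 < s" using s0 by simp
    define \<tau> where "\<tau> = complex_of_real (1 / s) \<cdot>\<^sub>m M"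
    have "density d \<tau>" unfolding \<tau>_def using pM trM sp by (rule density_smult_inverse_trace)
    moreover have "\<rho> + complex_of_real s \<cdot>\<^sub>m \<tau> = real_diag d c"
    proof (rule mat_eq_entries)
      fix i j assume ij: "i < d" "j < d"
      have "(\<rho> + complex_of_real s \<cdot>\<^sub>m \<tau>) $$ (i,j) = \<rho> $$ (i,j) + M $$ (i,j)"
        unfolding \<tau>_def using ij Mc \<rho>c sp by simp
      also have "\<dots> = real_diag d c $$ (i,j)" unfolding Me[OF ij] real_diag_def using ij by simp
      finally show "(\<rho> + complex_of_real s \<cdot>\<^sub>m \<tau>) $$ (i,j) = real_diag d c $$ (i,j)" .
    qed (use Mc \<rho>c in \<open>simp_all add: \<tau>_def real_diag_def\<close>)
    then have "(1 / (1 + complex_of_real s)) \<cdot>\<^sub>m (\<rho> + complex_of_real s \<cdot>\<^sub>m \<tau>) = real_diag d (\<lambda>i. c i / (1 + s))"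
      unfolding real_diag_def by (intro eq_matI) auto
    moreover have "incoherent d (real_diag d (\<lambda>i. c i / (1 + s)))"
      using c0 s0 unfolding s_def by (intro incoherent_real_diag) (simp_all flip: sum_divide_distrib)
    ultimately show ?thesis using s0 by (intro conjI exI[of _ \<tau>]) simp_all
  qed
qed

lemma feasible_of_max_correlation:
  assumes dens: "density d \<rho>" and X: "correlation_mat d X"
    and max: "\<forall>Y. correlation_mat d Y \<longrightarrow> schur_pairing d \<rho> Y \<le> schur_pairing d \<rho> X"
  defines "s \<equiv> schur_pairing d \<rho> X - 1"
  shows "0 \<le> s \<and> (\<exists>\<tau>. density d \<tau> \<and> incoherent d ((1 / (1 + complex_of_real s)) \<cdot>\<^sub>m (\<rho> + complex_of_real s \<cdot>\<^sub>m \<tau>)))"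
proof -
  define c where "c i = Re (\<Sum>j<d. \<rho> $$ (i,j) * X $$ (i,j))" for i
  have h: "hermitian_mat d \<rho>" using dens unfolding density_def by (simp add: psd_hermitian)
  have "psd d (real_diag d c - \<rho>)"
    using max_correlation_dominates[OF h X max] unfolding c_def by (intro psd_real_diag_minus[OF h])
  moreover have "s = (\<Sum>i<d. c i) - 1"
    unfolding s_def c_def schur_pairing_def by (simp add: Re_sum)
  ultimately show ?thesis using feasible_of_diagonal_dominance[OF dens] by simp
qed

lemma robustness_eq_max_schur_pairing:
  assumes dens: "density d \<rho>" and X: "correlation_mat d X"
    and max: "\<forall>Y. correlation_mat d Y \<longrightarrow> schur_pairing d \<rho> Y \<le> schur_pairing d \<rho> X"
  shows "robustness d \<rho> = schur_pairing d \<rho> X - 1"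
  unfolding robustness_def
proof (rule cInf_eq_minimum)
  show "schur_pairing d \<rho> X - 1 \<in> {s. 0 \<le> s \<and> (\<exists>\<tau>. density d \<tau> \<and>
      incoherent d ((1 / (1 + complex_of_real s)) \<cdot>\<^sub>m (\<rho> + complex_of_real s \<cdot>\<^sub>m \<tau>)))}"
    using feasible_of_max_correlation[OF dens X max] by simp
  fix s assume "s \<in> {s. 0 \<le> s \<and> (\<exists>\<tau>. density d \<tau> \<and>
      incoherent d ((1 / (1 + complex_of_real s)) \<cdot>\<^sub>m (\<rho> + complex_of_real s \<cdot>\<^sub>m \<tau>)))}"
  then obtain \<tau> where "0 \<le> s" "density d \<tau>"
    "incoherent d ((1 / (1 + complex_of_real s)) \<cdot>\<^sub>m (\<rho> + complex_of_real s \<cdot>\<^sub>m \<tau>))"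
    by blast
  moreover have "\<rho> \<in> carrier_mat d d" using dens unfolding density_def by (simp add: psd_carrier)
  ultimately show "schur_pairing d \<rho> X - 1 \<le> s"
    using schur_pairing_le_feasible[OF X] by fastforce
qed

lemma fidelity_schur_channel_phi_plus:
  assumes "psd d \<rho>" and "correlation_mat d Y" and "\<forall>\<sigma> \<in> carrier_mat d d. \<Lambda> \<sigma> = schur_prod d \<sigma> Y"
  shows "fidelity d (\<Lambda> \<rho>) (proj d (phi_plus d)) = schur_pairing d \<rho> Y / real d"
  using assms fidelity_schur_prod_phi_plus[OF assms(1), of Y] psd_carrier[OF assms(1)]
  unfolding correlation_mat_def by simp

theorem theorem2:
  fixes d :: nat and \<rho> :: "complex mat"
  assumes "density d \<rho>"
  shows "(\<exists>\<Lambda>. GIO d \<Lambda> \<and>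
            fidelity d (\<Lambda> \<rho>) (proj d (phi_plus d)) = robustness_bar d \<rho>) \<and>
         (\<forall>\<Lambda>. GIO d \<Lambda> \<longrightarrow>
            fidelity d (\<Lambda> \<rho>) (proj d (phi_plus d)) \<le> robustness_bar d \<rho>)"
proof -
  have \<rho>: "psd d \<rho>" using assms unfolding density_def by simp
  obtain X where X: "correlation_mat d X"
    and max: "\<forall>Y. correlation_mat d Y \<longrightarrow> schur_pairing d \<rho> Y \<le> schur_pairing d \<rho> X"
    using correlation_mat_max_exists by blast
  have bar: "robustness_bar d \<rho> = schur_pairing d \<rho> X / real d"
    unfolding robustness_bar_def robustness_eq_max_schur_pairing[OF assms X max] by simp
  obtain \<Lambda> where "GIO d \<Lambda>" and "\<forall>\<sigma> \<in> carrier_mat d d. \<Lambda> \<sigma> = schur_prod d \<sigma> X"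
    using correlation_mat_GIO[OF X] by blast
  then have "\<exists>\<Lambda>. GIO d \<Lambda> \<and> fidelity d (\<Lambda> \<rho>) (proj d (phi_plus d)) = robustness_bar d \<rho>"
    using fidelity_schur_channel_phi_plus[OF \<rho> X] bar by auto
  moreover have "fidelity d (\<Lambda>' \<rho>) (proj d (phi_plus d)) \<le> robustness_bar d \<rho>" if G: "GIO d \<Lambda>'" for \<Lambda>'
  proof -
    obtain Y where Y: "correlation_mat d Y" and "\<forall>\<sigma> \<in> carrier_mat d d. \<Lambda>' \<sigma> = schur_prod d \<sigma> Y"
      using GIO_schur_form[OF G] by blast
    then have "fidelity d (\<Lambda>' \<rho>) (proj d (phi_plus d)) = schur_pairing d \<rho> Y / real d"
      by (rule fidelity_schur_channel_phi_plus[OF \<rho>])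
    then show ?thesis unfolding bar using max Y by (simp add: divide_right_mono)
  qed
  ultimately show ?thesis by blast
qed

end
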